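(* Let $\mathcal H$ be a complex Hilbert space with inner product $\langle\cdot,\cdot\rangle_{\mathcal H}$, let $P$ be a bounded self-adjoint operator on $\mathcal H$, and let $|P|$, $|P|^{1/2}$, $\sigma$, $\pi$ and the forms $\langle\cdot,\cdot\rangle_P$, $[\cdot,\cdot]_P$ on $\mathrm{ran}\,|P|^{1/2}$ be as described in the context. Let $(\mathcal C,[\cdot,\cdot]_{\mathcal C})$ be a complex Hilbert space, let $\Omega$ be a set, and let $(g_z)_{z\in\Omega}$ be a family of bounded linear operators from $\mathcal C$ into $\mathcal H$ whose ranges span a dense subspace of $\mathcal H$. For $h\in\mathrm{ran}\,|P|^{1/2}$ define the function $\widehat{h}:\Omega\to\mathcal C$ by \[ [\widehat{h}(z),\eta]_{\mathcal C}=\langle h,g_z\eta\rangle_{\mathcal H},\qquad z\in\Omega,\ \eta\in\mathcal C . \] Then the set of functions $\{\widehat{|P|^{1/2}f}\,:\,f\in\mathcal H\}$, endowed with the form \[ [\widehat{|P|^{1/2}f},\widehat{|P|^{1/2}g}]_{K}=[|P|^{1/2}f,|P|^{1/2}g]_P,\qquad f,g\in\mathcal H, \] is a reproducing kernel Krein space of $\mathcal C$-valued functions on $\Omega$ whose reproducing kernel is given by \[ K(z,w)\xi=\big(\widehat{P(g_w\xi)}\big)(z),\qquad z,w\in\Omega,\ \xi\in\mathcal C, \] that is, for every $w\in\Omega$ and $\xi\in\mathcal C$ the function $K(\cdot,w)\xi$ belongs to the space and $[F,K(\cdot,w)\xi]_K=[F(w),\xi]_{\mathcal C}$ for every $F$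 in the space.
   Context: For a bounded self-adjoint operator $P$ on a Hilbert space $\mathcal H$: $|P|=(P^2)^{1/2}$ is its absolute value, $|P|^{1/2}$ the unique positive square root of $|P|$, $\sigma$ the sign of $P$ (so that $P=\sigma|P|$, with $\sigma$ obtained by functional calculus and vanishing on $\ker P$), and $\pi$ the orthogonal projection onto $\ker P$. The range $\mathrm{ran}\,|P|^{1/2}$ is endowed with the two forms $\langle |P|^{1/2}f,|P|^{1/2}g\rangle_P=\langle f,(I-\pi)g\rangle_{\mathcal H}$ and $[|P|^{1/2}f,|P|^{1/2}g]_P=\langle \sigma f,(I-\pi)g\rangle_{\mathcal H}$, $f,g\in\mathcal H$. A reproducing kernel Krein space of $\mathcal C$-valued functions on $\Omega$ is a Krein space of such functions with an operator-valued function $K(z,w)$ such that $K(\cdot,w)\xi$ lies in the space and $[F,K(\cdot,w)\xi]=[F(w),\xi]_{\mathcal C}$ for all $F$ in the space, $w\in\Omega$, $\xi\in\mathcal C$. *)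

theory Defs
  imports "HOL-Analysis.Analysis"
begin

class complex_vector = real_vector +
  fixes scaleC :: "complex \<Rightarrow> 'a \<Rightarrow> 'a"
  assumes scaleR_scaleC: "scaleR r x = scaleC (complex_of_real r) x"
    and scaleC_add_right: "scaleC a (x + y) = scaleC a x + scaleC a y"
    and scaleC_add_left: "scaleC (a + b) x = scaleC a x + scaleC b x"
    and scaleC_scaleC: "scaleC a (scaleC b x) = scaleC (a * b) x"
    and scaleC_one: "scaleC 1 x = x"

text \<open>Inner product linear in the first argument, conjugate-linear in the second.\<close>
class complex_inner = complex_vector + real_normed_vector +
  fixes cinner :: "'a \<Rightarrow> 'a \<Rightarrow> complex"
  assumes cinner_commute: "cinner x y = cnj (cinner y x)"
    and cinner_add_left: "cinner (x + y) z = cinner x z + cinner y z"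
    and cinner_scaleC_left: "cinner (scaleC r x) y = r * cinner x y"
    and cinner_ge_zero: "0 \<le> Re (cinner x x)"
    and cinner_eq_zero_iff: "cinner x x = 0 \<longleftrightarrow> x = 0"
    and norm_eq_sqrt_cinner: "norm x = sqrt (Re (cinner x x))"

class chilbert_space = complex_inner + complete_space

definition csubspace :: "'a::complex_vector set \<Rightarrow> bool" where
  "csubspace W \<longleftrightarrow> 0 \<in> W \<and> (\<forall>x\<in>W. \<forall>y\<in>W. x + y \<in> W) \<and> (\<forall>c. \<forall>x\<in>W. scaleC c x \<in> W)"

definition cspan :: "'a::complex_vector set \<Rightarrow> 'a set" where
  "cspan S = \<Inter>{W. csubspace W \<and> S \<subseteq> W}"

definition bounded_clinear :: "('a::complex_inner \<Rightarrow> 'b::complex_inner) \<Rightarrow> bool" where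
  "bounded_clinear f \<longleftrightarrow> bounded_linear f \<and> (\<forall>c x. f (scaleC c x) = scaleC c (f x))"

definition selfadjoint :: "('h::complex_inner \<Rightarrow> 'h) \<Rightarrow> bool" where
  "selfadjoint A \<longleftrightarrow> bounded_clinear A \<and> (\<forall>x y. cinner (A x) y = cinner x (A y))"

definition positive_op :: "('h::complex_inner \<Rightarrow> 'h) \<Rightarrow> bool" where
  "positive_op A \<longleftrightarrow> selfadjoint A \<and> (\<forall>x. 0 \<le> Re (cinner (A x) x))"

definition op_sqrt :: "('h::complex_inner \<Rightarrow> 'h) \<Rightarrow> ('h \<Rightarrow> 'h)" where
  "op_sqrt A = (THE B. positive_op B \<and> B \<circ> B = A)"

definition op_abs :: "('h::complex_inner \<Rightarrow> 'h) \<Rightarrow> ('h \<Rightarrow> 'h)" where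
  "op_abs P = op_sqrt (P \<circ> P)"

definition op_sqrtabs :: "('h::complex_inner \<Rightarrow> 'h) \<Rightarrow> ('h \<Rightarrow> 'h)" where
  "op_sqrtabs P = op_sqrt (op_abs P)"

definition kerproj :: "('h::complex_inner \<Rightarrow> 'h) \<Rightarrow> ('h \<Rightarrow> 'h)" where
  "kerproj P = (THE Q. selfadjoint Q \<and> Q \<circ> Q = Q \<and> range Q = {x. P x = 0})"

text \<open>sigma: the sign of P, i.e. the bounded operator with P = sigma |P| vanishing on ker P
  (this determines the functional-calculus sign uniquely).\<close>
definition opsign :: "('h::complex_inner \<Rightarrow> 'h) \<Rightarrow> ('h \<Rightarrow> 'h)" where
  "opsign P = (THE S. bounded_clinear S \<and> S \<circ> op_abs P = P \<and> (\<forall>x. P x = 0 \<longrightarrow> S x = 0))"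

definition hat :: "('z \<Rightarrow> 'c::complex_inner \<Rightarrow> 'h::complex_inner) \<Rightarrow> 'h \<Rightarrow> 'z \<Rightarrow> 'c" where
  "hat g h = (\<lambda>z. THE c. \<forall>\<eta>. cinner c \<eta> = cinner h (g z \<eta>))"

definition hatspace :: "('z \<Rightarrow> 'c::complex_inner \<Rightarrow> 'h::complex_inner) \<Rightarrow> ('h \<Rightarrow> 'h) \<Rightarrow> ('z \<Rightarrow> 'c) set" where
  "hatspace g P = {hat g (op_sqrtabs P f) | f. True}"

text \<open>[hat(|P|^(1/2) f), hat(|P|^(1/2) g)]_K = [|P|^(1/2) f, |P|^(1/2) g]_P = <sigma f, (I - pi) g>_H\<close>
definition Kform :: "('z \<Rightarrow> 'c::complex_inner \<Rightarrow> 'h::complex_inner) \<Rightarrow> ('h \<Rightarrow> 'h)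
    \<Rightarrow> ('z \<Rightarrow> 'c) \<Rightarrow> ('z \<Rightarrow> 'c) \<Rightarrow> complex" where
  "Kform g P F G =
    (let f = (SOME f. F = hat g (op_sqrtabs P f));
         h = (SOME h. G = hat g (op_sqrtabs P h))
     in cinner (opsign P f) (h - kerproj P h))"

definition fun_csubspace :: "('z \<Rightarrow> 'c::complex_vector) set \<Rightarrow> bool" where
  "fun_csubspace V \<longleftrightarrow> (\<lambda>z. 0) \<in> V \<and> (\<forall>F\<in>V. \<forall>G\<in>V. (\<lambda>z. F z + G z) \<in> V)
     \<and> (\<forall>c. \<forall>F\<in>V. (\<lambda>z. scaleC c (F z)) \<in> V)"

definition fun_hilbert :: "('z \<Rightarrow> 'c::complex_vector) set \<Rightarrow> (('z \<Rightarrow> 'c) \<Rightarrow> ('z \<Rightarrow> 'c) \<Rightarrow> complex) \<Rightarrow> bool" where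
  "fun_hilbert W B \<longleftrightarrow>
     (\<forall>F\<in>W. F \<noteq> (\<lambda>z. 0) \<longrightarrow> 0 < Re (B F F)) \<and>
     (\<forall>s::nat \<Rightarrow> 'z \<Rightarrow> 'c. (\<forall>n. s n \<in> W) \<and>
          (\<forall>e::real>0. \<exists>N. \<forall>m\<ge>N. \<forall>n\<ge>N. Re (B (\<lambda>z. s m z - s n z) (\<lambda>z. s m z - s n z)) < e)
        \<longrightarrow> (\<exists>F\<in>W. \<forall>e::real>0. \<exists>N. \<forall>n\<ge>N. Re (B (\<lambda>z. s n z - F z) (\<lambda>z. s n z - F z)) < e))"

definition fun_krein_space :: "('z \<Rightarrow> 'c::complex_vector) set \<Rightarrow> (('z \<Rightarrow> 'c) \<Rightarrow> ('z \<Rightarrow> 'c) \<Rightarrow> complex) \<Rightarrow> bool" where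
  "fun_krein_space V B \<longleftrightarrow>
     fun_csubspace V \<and>
     (\<forall>F\<in>V. \<forall>G\<in>V. \<forall>H\<in>V. \<forall>a. B (\<lambda>z. scaleC a (F z) + G z) H = a * B F H + B G H) \<and>
     (\<forall>F\<in>V. \<forall>G\<in>V. B F G = cnj (B G F)) \<and>
     (\<exists>Vp Vm. fun_csubspace Vp \<and> fun_csubspace Vm \<and> Vp \<subseteq> V \<and> Vm \<subseteq> V \<and>
        Vp \<inter> Vm = {\<lambda>z. 0} \<and>
        (\<forall>F\<in>V. \<exists>Fp\<in>Vp. \<exists>Fm\<in>Vm. F = (\<lambda>z. Fp z + Fm z)) \<and>
        (\<forall>Fp\<in>Vp. \<forall>Fm\<in>Vm. B Fp Fm = 0) \<and>
        fun_hilbert Vp B \<and> fun_hilbert Vm (\<lambda>F G. - B F G))"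

definition rk_krein_space :: "('z \<Rightarrow> 'c::complex_inner) set \<Rightarrow> (('z \<Rightarrow> 'c) \<Rightarrow> ('z \<Rightarrow> 'c) \<Rightarrow> complex)
    \<Rightarrow> ('z \<Rightarrow> 'z \<Rightarrow> 'c \<Rightarrow> 'c) \<Rightarrow> bool" where
  "rk_krein_space V B K \<longleftrightarrow>
     fun_krein_space V B \<and> (\<forall>z w. bounded_clinear (K z w)) \<and>
     (\<forall>w \<xi>. (\<lambda>z. K z w \<xi>) \<in> V \<and> (\<forall>F\<in>V. B F (\<lambda>z. K z w \<xi>) = cinner (F w) \<xi>))"

end

theory Submission
  imports Defs "HOL-Computational_Algebra.Formal_Power_Series"
begin

(* Write R = |P|^(1/2). Since the ranges of the g z are dense, h |-> hat h is injective, and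
   ker R = ker P; so f |-> hat (R f) identifies the function space with H / ker P, and the form
   becomes [f, h] = <sigma f, h>. With P+ = (|P| + P)/2 and P- = (|P| - P)/2 one has P+ P- = 0, and
   sigma = E+ - E- for the orthogonal projections E+- onto the closures of the ranges of P+-.
   The images of ran E+ and ran E- form a fundamental decomposition: on each of them +-[.,.] is
   the inner product of a closed subspace of H, hence complete. Finally R sigma R = sigma |P| = P,
   so the kernel function hat (P (g w xi)) is the image of sigma (R (g w xi)), and
   [hat (R f), hat (P (g w xi))] = <sigma f, sigma R (g w xi)> = <R f, g w xi> = [hat (R f) w, xi]
   because sigma^2 = E+ + E- acts as the identity modulo ker P.
   Square roots of positive operators are obtained from the binomial series of sqrt (1 - t). *)

section \<open>Complex inner product spaces\<close>

declare scaleC_one [simp]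

context complex_vector
begin

lemma scaleC_zero_right [simp]: "scaleC a 0 = 0"
  using scaleC_add_right [of a 0 0] by simp

lemma scaleC_zero_left [simp]: "scaleC 0 x = 0"
  using scaleC_add_left [of 0 0 x] by simp

lemma scaleC_minus_right: "scaleC a (- x) = - scaleC a x"
  using scaleC_add_right [of a "- x" x] by (simp add: eq_neg_iff_add_eq_0)

lemma scaleC_minus_left: "scaleC (- a) x = - scaleC a x"
  using scaleC_add_left [of "- a" a x] by (simp add: eq_neg_iff_add_eq_0)

lemma scaleC_diff_right: "scaleC a (x - y) = scaleC a x - scaleC a y"
  using scaleC_add_right [of a x "- y"] by (simp add: scaleC_minus_right)

lemma scaleC_scaleR_commute: "scaleC a (scaleR r x) = scaleR r (scaleC a x)"
  by (simp add: scaleR_scaleC scaleC_scaleC mult.commute)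

end

context complex_inner
begin

lemma cinner_add_right: "cinner x (y + z) = cinner x y + cinner x z"
  by (metis cinner_commute cinner_add_left complex_cnj_add)

lemma cinner_scaleC_right: "cinner x (scaleC r y) = cnj r * cinner x y"
  by (metis cinner_commute cinner_scaleC_left complex_cnj_mult complex_cnj_cnj)

lemma cinner_zero_left [simp]: "cinner 0 x = 0"
  using cinner_add_left [of 0 0 x] by simp

lemma cinner_zero_right [simp]: "cinner x 0 = 0"
  using cinner_add_right [of x 0 0] by simp

lemma cinner_minus_left: "cinner (- x) y = - cinner x y"
proof -
  have h: "cinner x y + cinner (- x) y = 0" using cinner_add_left [of x "- x" y] by simp
  have "cinner (- x) y = (cinner x y + cinner (- x) y) - cinner x y" by simp
  also have "\<dots> = - cinner x y" using h by simp
  finally show ?thesis .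
qed

lemma cinner_minus_right: "cinner x (- y) = - cinner x y"
proof -
  have h: "cinner x y + cinner x (- y) = 0" using cinner_add_right [of x y "- y"] by simp
  have "cinner x (- y) = (cinner x y + cinner x (- y)) - cinner x y" by simp
  also have "\<dots> = - cinner x y" using h by simp
  finally show ?thesis .
qed

lemma cinner_diff_left: "cinner (x - y) z = cinner x z - cinner y z"
  using cinner_add_left [of x "- y" z] by (simp add: cinner_minus_left)

lemma cinner_diff_right: "cinner x (y - z) = cinner x y - cinner x z"
  using cinner_add_right [of x y "- z"] by (simp add: cinner_minus_right)

lemma cinner_scaleR_left: "cinner (scaleR r x) y = complex_of_real r * cinner x y"
  by (simp add: scaleR_scaleC cinner_scaleC_left)

lemma cinner_scaleR_right: "cinner x (scaleR r y) = complex_of_real r * cinner x y"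
  by (simp add: scaleR_scaleC cinner_scaleC_right)

lemma cinner_self: "cinner x x = complex_of_real ((norm x)\<^sup>2)"
proof -
  have "Im (cinner x x) = 0"
    using arg_cong [OF cinner_commute [of x x], of Im] by simp
  moreover have "(norm x)\<^sup>2 = Re (cinner x x)"
    by (simp add: norm_eq_sqrt_cinner cinner_ge_zero)
  ultimately show ?thesis by (simp add: complex_eq_iff)
qed

lemma cinner_self_Re: "Re (cinner x x) = (norm x)\<^sup>2"
  by (simp add: cinner_self)

lemma cinner_ext_left: "(\<And>y. cinner a y = cinner b y) \<Longrightarrow> a = b"
  using cinner_eq_zero_iff [of "a - b"] by (simp add: cinner_diff_left)

lemma norm_scaleC: "norm (scaleC a x) = cmod a * norm x"
proof -
  have "(norm (scaleC a x))\<^sup>2 = Re (cinner (scaleC a x) (scaleC a x))" by (simp add: cinner_self_Re)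
  also have "\<dots> = Re (a * cnj a * cinner x x)"
    by (simp only: cinner_scaleC_left cinner_scaleC_right mult.assoc mult.left_commute)
  also have "\<dots> = Re (complex_of_real ((cmod a)\<^sup>2) * complex_of_real ((norm x)\<^sup>2))"
    by (simp only: complex_norm_square cinner_self)
  also have "\<dots> = (cmod a * norm x)\<^sup>2"
    by (simp only: Re_complex_of_real power_mult_distrib flip: of_real_mult)
  finally show ?thesis by (simp add: power2_eq_iff_nonneg)
qed

lemma pythagoras:
  assumes "cinner x y = 0"
  shows "(norm (x + y))\<^sup>2 = (norm x)\<^sup>2 + (norm y)\<^sup>2"
proof -
  have "cinner y x = 0" using assms by (metis cinner_commute complex_cnj_zero)
  then have "Re (cinner (x + y) (x + y)) = Re (cinner x x) + Re (cinner y y)"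
    using assms by (simp add: cinner_add_left cinner_add_right)
  then show ?thesis by (simp add: cinner_self_Re)
qed

lemma parallelogram_law:
  "(norm (x + y))\<^sup>2 + (norm (x - y))\<^sup>2 = 2 * (norm x)\<^sup>2 + 2 * (norm y)\<^sup>2"
proof -
  have "cinner (x + y) (x + y) + cinner (x - y) (x - y) = 2 * cinner x x + 2 * cinner y y"
    by (simp add: cinner_add_left cinner_add_right cinner_diff_left cinner_diff_right)
  then have "Re (cinner (x + y) (x + y)) + Re (cinner (x - y) (x - y))
      = 2 * Re (cinner x x) + 2 * Re (cinner y y)"
    by (metis plus_complex.sel(1) Re_complex_of_real mult_2 of_real_add)
  then show ?thesis by (simp add: cinner_self_Re)
qed

end

lemma complex_quadratic_Re:
  fixes a :: complex and p q s :: real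
  shows "Re (complex_of_real p - cnj (complex_of_real s * a) * a - complex_of_real s * a * cnj a
      + complex_of_real s * a * cnj (complex_of_real s * a) * complex_of_real q)
    = p - 2 * s * (cmod a)\<^sup>2 + s\<^sup>2 * (cmod a)\<^sup>2 * q"
proof -
  have "cmod a * cmod a = Re a * Re a + Im a * Im a"
    using cmod_power2 [of a] by (simp add: power2_eq_square)
  then show ?thesis by (simp add: algebra_simps power2_eq_square)
qed

lemma quadratic_nonneg_imp_le:
  fixes p q b :: real
  assumes nonneg: "\<And>s. 0 \<le> p - 2 * s * b + s\<^sup>2 * b * q" and "0 \<le> q"
  shows "b \<le> p * q"
proof (cases "q = 0")
  case True
  show ?thesis
  proof (rule ccontr)
    assume "\<not> b \<le> p * q"
    then have "b > 0" using True by simp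
    then have "p - 2 * ((p + 1) / (2 * b)) * b = -1" by (simp add: field_simps)
    then show False using nonneg [of "(p + 1) / (2 * b)"] True by simp
  qed
next
  case False
  then have q: "q > 0" using \<open>0 \<le> q\<close> by simp
  have "0 \<le> p - 2 * (1 / q) * b + (1 / q)\<^sup>2 * b * q" by (rule nonneg)
  also have "\<dots> = p - b / q" using q by (simp add: field_simps power2_eq_square)
  finally show ?thesis using q by (simp add: field_simps)
qed

section \<open>Bounded complex-linear maps and self-adjoint operators\<close>

lemma bounded_clinear_bounded_linear: "bounded_clinear f \<Longrightarrow> bounded_linear f"
  and clinear_scaleC: "bounded_clinear f \<Longrightarrow> f (scaleC c x) = scaleC c (f x)"
  unfolding bounded_clinear_def by auto

lemma bounded_clinear_linear: "bounded_clinear f \<Longrightarrow> linear f"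
  using bounded_clinear_bounded_linear bounded_linear.linear by blast

lemma clinear_add: "bounded_clinear f \<Longrightarrow> f (x + y) = f x + f y"
  and clinear_diff: "bounded_clinear f \<Longrightarrow> f (x - y) = f x - f y"
  and clinear_minus: "bounded_clinear f \<Longrightarrow> f (- x) = - f x"
  and clinear_zero: "bounded_clinear f \<Longrightarrow> f 0 = 0"
  and clinear_sum: "bounded_clinear f \<Longrightarrow> f (sum g A) = (\<Sum>i\<in>A. f (g i))"
  and clinear_scaleR: "bounded_clinear f \<Longrightarrow> f (scaleR r x) = scaleR r (f x)"
  by (simp_all add: bounded_clinear_linear linear_add linear_diff linear_neg linear_0
      linear_sum linear_scale)

lemma clinear_suminf: "bounded_clinear f \<Longrightarrow> summable g \<Longrightarrow> f (suminf g) = (\<Sum>n. f (g n))"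
  using bounded_clinear_bounded_linear bounded_linear.suminf by metis

lemma bounded_clinear_pos_bound: "bounded_clinear f \<Longrightarrow> \<exists>K>0. \<forall>x. norm (f x) \<le> norm x * K"
  using bounded_clinear_bounded_linear bounded_linear.pos_bounded by blast

lemma bounded_clinear_continuous_on: "bounded_clinear f \<Longrightarrow> continuous_on S f"
  using bounded_clinear_bounded_linear linear_continuous_on by blast

lemma bounded_clinearI:
  assumes "\<And>x y. f (x + y) = f x + f y" "\<And>c x. f (scaleC c x) = scaleC c (f x)"
    and "\<And>x. norm (f x) \<le> norm x * K"
  shows "bounded_clinear f"
  unfolding bounded_clinear_def
proof (intro conjI allI)
  show "bounded_linear f"
    by (rule bounded_linear_intro [where K = K]) (auto simp: assms scaleR_scaleC)
qed (rule assms(2))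

lemma bounded_clinear_ident: "bounded_clinear (\<lambda>x. x)"
  by (rule bounded_clinearI [where K = 1]) auto

lemma bounded_clinear_compose:
  "bounded_clinear f \<Longrightarrow> bounded_clinear g \<Longrightarrow> bounded_clinear (\<lambda>x. f (g x))"
  unfolding bounded_clinear_def using bounded_linear_compose by auto

lemma bounded_clinear_add:
  "bounded_clinear f \<Longrightarrow> bounded_clinear g \<Longrightarrow> bounded_clinear (\<lambda>x. f x + g x)"
  unfolding bounded_clinear_def using bounded_linear_add by (auto simp: scaleC_add_right)

lemma bounded_clinear_sub:
  "bounded_clinear f \<Longrightarrow> bounded_clinear g \<Longrightarrow> bounded_clinear (\<lambda>x. f x - g x)"
  unfolding bounded_clinear_def using bounded_linear_sub by (auto simp: scaleC_diff_right)

lemma bounded_clinear_const_scaleC: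
  assumes f: "bounded_clinear f"
  shows "bounded_clinear (\<lambda>x. scaleC a (f x))"
proof -
  obtain K where K: "\<And>x. norm (f x) \<le> norm x * K" using bounded_clinear_pos_bound [OF f] by blast
  show ?thesis
  proof (rule bounded_clinearI [where K = "cmod a * K"])
    fix x
    have "cmod a * norm (f x) \<le> cmod a * (norm x * K)" using K [of x] by (rule mult_left_mono) simp
    then show "norm (scaleC a (f x)) \<le> norm x * (cmod a * K)" by (simp add: norm_scaleC mult_ac)
  qed (simp_all add: clinear_add [OF f] clinear_scaleC [OF f] scaleC_add_right scaleC_scaleC
      mult.commute)
qed

lemma bounded_clinear_const_scaleR: "bounded_clinear f \<Longrightarrow> bounded_clinear (\<lambda>x. scaleR r (f x))"
  using bounded_clinear_const_scaleC [of f "complex_of_real r"] by (simp add: scaleR_scaleC)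

lemma bounded_linear_scaleC: "bounded_linear (scaleC c :: 'a::complex_inner \<Rightarrow> 'a)"
  using bounded_clinear_bounded_linear [OF bounded_clinear_const_scaleC [OF bounded_clinear_ident, of c]]
  by simp

lemma selfadjointD: "selfadjoint A \<Longrightarrow> cinner (A x) y = cinner x (A y)"
  unfolding selfadjoint_def by blast

lemma selfadjoint_bounded_clinear: "selfadjoint A \<Longrightarrow> bounded_clinear A"
  unfolding selfadjoint_def by blast

lemma positive_op_selfadjoint: "positive_op A \<Longrightarrow> selfadjoint A"
  unfolding positive_op_def by blast

lemma positive_opD: "positive_op A \<Longrightarrow> 0 \<le> Re (cinner (A x) x)"
  unfolding positive_op_def by blast

lemma selfadjoint_cinner_real:
  assumes "selfadjoint A"
  shows "cinner (A x) x = complex_of_real (Re (cinner (A x) x))"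
proof -
  have e: "cinner (A x) x = cnj (cinner (A x) x)"
    using selfadjointD [OF assms, of x x] cinner_commute [of x "A x"] by simp
  have "Im (cinner (A x) x) = 0" using arg_cong [OF e, of Im] by simp
  then show ?thesis by (simp add: complex_eq_iff)
qed

lemma selfadjoint_ident: "selfadjoint (\<lambda>x::'a::complex_inner. x)"
  unfolding selfadjoint_def using bounded_clinear_ident by simp

lemma positive_op_ident: "positive_op (\<lambda>x::'a::complex_inner. x)"
  unfolding positive_op_def using selfadjoint_ident by (simp add: cinner_ge_zero)

lemma selfadjoint_compose:
  "selfadjoint A \<Longrightarrow> selfadjoint B \<Longrightarrow> (\<And>x. A (B x) = B (A x)) \<Longrightarrow> selfadjoint (\<lambda>x. A (B x))"
  unfolding selfadjoint_def using bounded_clinear_compose by metis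

lemma selfadjoint_add: "selfadjoint A \<Longrightarrow> selfadjoint B \<Longrightarrow> selfadjoint (\<lambda>x. A x + B x)"
  unfolding selfadjoint_def by (simp add: bounded_clinear_add cinner_add_left cinner_add_right)

lemma selfadjoint_diff: "selfadjoint A \<Longrightarrow> selfadjoint B \<Longrightarrow> selfadjoint (\<lambda>x. A x - B x)"
  unfolding selfadjoint_def by (simp add: bounded_clinear_sub cinner_diff_left cinner_diff_right)

lemma selfadjoint_scaleR: "selfadjoint A \<Longrightarrow> selfadjoint (\<lambda>x. scaleR r (A x))"
  unfolding selfadjoint_def
  by (simp add: bounded_clinear_const_scaleR cinner_scaleR_left cinner_scaleR_right)

lemma positive_op_scaleR: "positive_op A \<Longrightarrow> 0 \<le> r \<Longrightarrow> positive_op (\<lambda>x. scaleR r (A x))"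
  unfolding positive_op_def by (simp add: selfadjoint_scaleR cinner_scaleR_left)

lemma cinner_apply_diff_scaleC:
  assumes "bounded_clinear C"
  shows "cinner (C (x - scaleC t y)) (x - scaleC t y) =
     cinner (C x) x - cnj t * cinner (C x) y - t * cinner (C y) x + t * cnj t * cinner (C y) y"
  by (simp add: clinear_diff [OF assms] clinear_scaleC [OF assms] cinner_diff_left cinner_diff_right
      cinner_scaleC_left cinner_scaleC_right algebra_simps)

lemma positive_op_Cauchy_Schwarz:
  assumes C: "positive_op C"
  shows "(cmod (cinner (C x) y))\<^sup>2 \<le> Re (cinner (C x) x) * Re (cinner (C y) y)"
proof -
  have sa: "selfadjoint C" using C by (rule positive_op_selfadjoint)
  define a where "a = cinner (C x) y"
  define p where "p = Re (cinner (C x) x)"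
  define q where "q = Re (cinner (C y) y)"
  have cyx: "cinner (C y) x = cnj a"
    unfolding a_def using selfadjointD [OF sa, of y x] cinner_commute [of y "C x"] by simp
  have px: "cinner (C x) x = complex_of_real p"
    unfolding p_def by (rule selfadjoint_cinner_real [OF sa])
  have qy: "cinner (C y) y = complex_of_real q"
    unfolding q_def by (rule selfadjoint_cinner_real [OF sa])
  have "0 \<le> p - 2 * s * (cmod a)\<^sup>2 + s\<^sup>2 * (cmod a)\<^sup>2 * q" for s :: real
  proof -
    have "0 \<le> Re (cinner (C (x - scaleC (complex_of_real s * a) y)) (x - scaleC (complex_of_real s * a) y))"
      using C by (rule positive_opD)
    also have "\<dots> = p - 2 * s * (cmod a)\<^sup>2 + s\<^sup>2 * (cmod a)\<^sup>2 * q"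
      unfolding cinner_apply_diff_scaleC [OF selfadjoint_bounded_clinear [OF sa]] cyx px qy
        a_def [symmetric]
      by (rule complex_quadratic_Re)
    finally show ?thesis .
  qed
  moreover have "0 \<le> q" unfolding q_def using C by (rule positive_opD)
  ultimately have "(cmod a)\<^sup>2 \<le> p * q" by (rule quadratic_nonneg_imp_le)
  then show ?thesis by (simp add: a_def p_def q_def)
qed

lemma cmod_cinner_le: "cmod (cinner x y) \<le> norm x * norm y"
proof -
  have "(cmod (cinner x y))\<^sup>2 \<le> (norm x * norm y)\<^sup>2"
    using positive_op_Cauchy_Schwarz [OF positive_op_ident, of x y]
    by (simp add: cinner_self_Re power_mult_distrib)
  then show ?thesis by (rule power2_le_imp_le) simp
qed

lemma positive_op_eq_0:
  assumes C: "positive_op C" and "Re (cinner (C v) v) = 0"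
  shows "C v = 0"
proof -
  have "cinner (C v) w = 0" for w
    using positive_op_Cauchy_Schwarz [OF C, of v w] assms(2) by simp
  then show ?thesis using cinner_eq_zero_iff by blast
qed

lemma bounded_bilinear_cinner: "bounded_bilinear (cinner :: 'a::complex_inner \<Rightarrow> 'a \<Rightarrow> complex)"
proof
  fix a a' b b' :: 'a and r :: real
  show "cinner (a + a') b = cinner a b + cinner a' b" by (rule cinner_add_left)
  show "cinner a (b + b') = cinner a b + cinner a b'" by (rule cinner_add_right)
  show "cinner (r *\<^sub>R a) b = r *\<^sub>R cinner a b" by (simp add: cinner_scaleR_left scaleR_conv_of_real)
  show "cinner a (r *\<^sub>R b) = r *\<^sub>R cinner a b" by (simp add: cinner_scaleR_right scaleR_conv_of_real)
  show "\<exists>K. \<forall>a b. norm (cinner a b) \<le> norm a * norm b * K"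
    by (rule exI [of _ 1]) (simp add: cmod_cinner_le)
qed

lemma bounded_linear_cinner_left: "bounded_linear (\<lambda>x. cinner x y)"
  by (rule bounded_bilinear.bounded_linear_left [OF bounded_bilinear_cinner])

lemma bounded_linear_cinner_right: "bounded_linear (\<lambda>y. cinner x y)"
  by (rule bounded_bilinear.bounded_linear_right [OF bounded_bilinear_cinner])

lemma suminf_cinner_left: "summable f \<Longrightarrow> cinner (suminf f) y = (\<Sum>n. cinner (f n) y)"
  using bounded_linear.suminf [OF bounded_linear_cinner_left] by metis

lemma suminf_cinner_right: "summable f \<Longrightarrow> cinner y (suminf f) = (\<Sum>n. cinner y (f n))"
  using bounded_linear.suminf [OF bounded_linear_cinner_right] by metis

context chilbert_space
begin
subclass banach ..
end

section \<open>Orthogonal projections\<close>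

lemma csubspace_0: "csubspace W \<Longrightarrow> 0 \<in> W"
  and csubspace_add: "csubspace W \<Longrightarrow> x \<in> W \<Longrightarrow> y \<in> W \<Longrightarrow> x + y \<in> W"
  and csubspace_scaleC: "csubspace W \<Longrightarrow> x \<in> W \<Longrightarrow> scaleC c x \<in> W"
  unfolding csubspace_def by blast+

lemma csubspace_scaleR: "csubspace W \<Longrightarrow> x \<in> W \<Longrightarrow> scaleR r x \<in> W"
  unfolding scaleR_scaleC by (rule csubspace_scaleC)

lemma csubspace_diff: "csubspace W \<Longrightarrow> x \<in> W \<Longrightarrow> y \<in> W \<Longrightarrow> x - y \<in> W"
  using csubspace_add [of W x "scaleC (-1) y"] csubspace_scaleC [of W y "-1"]
  by (simp add: scaleC_minus_left)

lemma csubspace_kernel: "bounded_clinear T \<Longrightarrow> csubspace {x. T x = 0}"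
  unfolding csubspace_def by (simp add: clinear_zero clinear_add clinear_scaleC)

lemma closed_kernel: "bounded_clinear T \<Longrightarrow> closed {x. T x = 0}"
  by (rule closed_Collect_eq) (simp_all add: bounded_clinear_continuous_on)

lemma csubspace_range: "bounded_clinear T \<Longrightarrow> csubspace (range T)"
  unfolding csubspace_def
  by (auto simp: clinear_zero [symmetric] clinear_add [symmetric] clinear_scaleC [symmetric]
      intro: range_eqI)

lemma csubspace_closure:
  fixes W :: "'a::chilbert_space set"
  assumes W: "csubspace W"
  shows "csubspace (closure W)"
  unfolding csubspace_def
proof (intro conjI ballI allI)
  show "0 \<in> closure W" using csubspace_0 [OF W] closure_subset by blast
next
  fix x y assume x: "x \<in> closure W" and y: "y \<in> closure W"
  obtain s where s: "\<And>n. s n \<in> W" "s \<longlonglongrightarrow> x" using x closure_sequential by metis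
  obtain t where t: "\<And>n. t n \<in> W" "t \<longlonglongrightarrow> y" using y closure_sequential by metis
  have "(\<lambda>n. s n + t n) \<longlonglongrightarrow> x + y" by (intro tendsto_add s t)
  moreover have "\<And>n. s n + t n \<in> W" using W s t csubspace_add by blast
  ultimately show "x + y \<in> closure W" unfolding closure_sequential
    by (intro exI [of _ "\<lambda>n. s n + t n"]) simp
next
  fix c x assume x: "x \<in> closure W"
  obtain s where s: "\<And>n. s n \<in> W" "s \<longlonglongrightarrow> x" using x closure_sequential by metis
  have "(\<lambda>n. scaleC c (s n)) \<longlonglongrightarrow> scaleC c x" by (rule bounded_linear.tendsto [OF bounded_linear_scaleC s(2)])
  moreover have "\<And>n. scaleC c (s n) \<in> W" using W s csubspace_scaleC by blast
  ultimately show "scaleC c x \<in> closure W" unfolding closure_sequential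
    by (intro exI [of _ "\<lambda>n. scaleC c (s n)"]) simp
qed

lemma csubspace_parallelogram_bound:
  fixes x :: "'a::complex_inner"
  assumes M: "csubspace M" and "u \<in> M" "v \<in> M" and D: "\<forall>m\<in>M. D \<le> (norm (x - m))\<^sup>2"
  shows "(norm (u - v))\<^sup>2 + 4 * D \<le> 2 * (norm (x - u))\<^sup>2 + 2 * (norm (x - v))\<^sup>2"
proof -
  define mid where "mid = scaleR (1/2) (u + v)"
  have "mid \<in> M" unfolding mid_def using assms by (intro csubspace_scaleR csubspace_add)
  moreover have "(x - u) + (x - v) = scaleR 2 (x - mid)"
    unfolding mid_def by (simp add: algebra_simps scaleR_2)
  ultimately have "4 * D \<le> (norm ((x - u) + (x - v)))\<^sup>2"
    using D by (simp add: power_mult_distrib)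
  moreover have "(x - u) - (x - v) = v - u" by simp
  ultimately show ?thesis
    using parallelogram_law [of "x - u" "x - v"] by (simp add: norm_minus_commute)
qed

lemma csubspace_minimizing_sequence_Cauchy:
  fixes x :: "'a::complex_inner"
  assumes sub: "csubspace M" and sM: "\<And>n. s n \<in> M" and low: "\<forall>m\<in>M. D \<le> (norm (x - m))\<^sup>2"
    and sD: "\<And>n. (norm (x - s n))\<^sup>2 < D + inverse (real (Suc n))"
  shows "Cauchy s"
proof (rule CauchyI)
  fix e :: real assume e: "0 < e"
  obtain N :: nat where "4 / e\<^sup>2 < real N" using reals_Archimedean2 by blast
  then have N: "4 / e\<^sup>2 < real (Suc N)" by simp
  have "norm (s m - s n) < e" if "m \<ge> N" "n \<ge> N" for m n
  proof -
    have "inverse (real (Suc m)) \<le> inverse (real (Suc N))"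
      "inverse (real (Suc n)) \<le> inverse (real (Suc N))"
      using that by (simp_all add: field_simps)
    moreover have "(norm (s m - s n))\<^sup>2 + 4 * D \<le> 2 * (norm (x - s m))\<^sup>2 + 2 * (norm (x - s n))\<^sup>2"
      by (rule csubspace_parallelogram_bound [OF sub sM sM low])
    ultimately have "(norm (s m - s n))\<^sup>2 \<le> 4 * inverse (real (Suc N))"
      using sD [of m] sD [of n] by linarith
    also have "\<dots> < e\<^sup>2"
    proof -
      have "4 < e\<^sup>2 * real (Suc N)" using N e by (simp add: field_simps)
      then show ?thesis by (simp add: field_simps)
    qed
    finally show ?thesis using e by (simp add: power_less_imp_less_base)
  qed
  then show "\<exists>M. \<forall>m\<ge>M. \<forall>n\<ge>M. norm (s m - s n) < e" by blast
qed

lemma closed_csubspace_ex_minimizer: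
  fixes x :: "'a::chilbert_space"
  assumes cl: "closed M" and sub: "csubspace M"
  shows "\<exists>p\<in>M. \<forall>m\<in>M. (norm (x - p))\<^sup>2 \<le> (norm (x - m))\<^sup>2"
proof -
  define S where "S = (\<lambda>m. (norm (x - m))\<^sup>2) ` M"
  define D where "D = Inf S"
  have "S \<noteq> {}" unfolding S_def using csubspace_0 [OF sub] by blast
  have bdd: "bdd_below S" unfolding S_def by (rule bdd_belowI [of _ 0]) auto
  have low: "\<forall>m\<in>M. D \<le> (norm (x - m))\<^sup>2"
    unfolding D_def using bdd by (auto intro: cInf_lower simp: S_def)
  have "\<exists>m\<in>M. (norm (x - m))\<^sup>2 < D + inverse (real (Suc n))" for n
    using cInf_lessD [OF \<open>S \<noteq> {}\<close>, of "D + inverse (real (Suc n))"] unfolding D_def S_def by auto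
  then obtain s where sM: "\<And>n. s n \<in> M"
    and sD: "\<And>n. (norm (x - s n))\<^sup>2 < D + inverse (real (Suc n))"
    by metis
  obtain p where lim: "s \<longlonglongrightarrow> p"
    using csubspace_minimizing_sequence_Cauchy [OF sub sM low sD] Cauchy_convergent convergent_def
    by blast
  have "(norm (x - p))\<^sup>2 \<le> D"
  proof (rule LIMSEQ_le)
    show "(\<lambda>n. (norm (x - s n))\<^sup>2) \<longlonglongrightarrow> (norm (x - p))\<^sup>2" by (intro tendsto_intros lim)
    show "(\<lambda>n. D + inverse (real (Suc n))) \<longlonglongrightarrow> D"
      using tendsto_add [OF tendsto_const LIMSEQ_inverse_real_of_nat, of D] by simp
  qed (use sD less_imp_le in blast)
  then show ?thesis
    using closed_sequentially [OF cl sM lim] low order_trans by blast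
qed

lemma closed_csubspace_ex_orthogonal_decomposition:
  fixes x :: "'a::chilbert_space"
  assumes cl: "closed M" and sub: "csubspace M"
  shows "\<exists>p\<in>M. \<forall>m\<in>M. cinner (x - p) m = 0"
proof -
  obtain p where pM: "p \<in> M" and pmin: "\<And>m. m \<in> M \<Longrightarrow> (norm (x - p))\<^sup>2 \<le> (norm (x - m))\<^sup>2"
    using closed_csubspace_ex_minimizer [OF cl sub] by blast
  have "cinner (x - p) m = 0" if mM: "m \<in> M" for m
  proof (rule ccontr)
    define u where "u = x - p"
    define a where "a = cinner u m"
    define q where "q = (norm m)\<^sup>2"
    assume "cinner (x - p) m \<noteq> 0"
    then have "a \<noteq> 0" "m \<noteq> 0" unfolding a_def u_def by auto
    then have "q > 0" unfolding q_def by simp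
    define t where "t = complex_of_real (1 / q) * a"
    \<comment> \<open>Moving from \<open>p\<close> towards \<open>p + t m\<close> would decrease the distance to \<open>x\<close> by \<open>|a|\<^sup>2 / q\<close>.\<close>
    have "p + scaleC t m \<in> M" using pM mM sub by (intro csubspace_add csubspace_scaleC)
    then have "(norm u)\<^sup>2 \<le> (norm (u - scaleC t m))\<^sup>2"
      using pmin unfolding u_def by (simp add: diff_diff_eq)
    also have "\<dots> = Re (cinner (u - scaleC t m) (u - scaleC t m))" by (simp add: cinner_self_Re)
    also have "\<dots> = (norm u)\<^sup>2 - 2 * (1/q) * (cmod a)\<^sup>2 + (1/q)\<^sup>2 * (cmod a)\<^sup>2 * q"
    proof -
      have mu: "cinner m u = cnj a" unfolding a_def by (metis cinner_commute)
      show ?thesis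
        unfolding cinner_apply_diff_scaleC [OF bounded_clinear_ident] mu cinner_self [of u]
          cinner_self [of m] q_def [symmetric] a_def [symmetric] t_def
        by (rule complex_quadratic_Re)
    qed
    also have "\<dots> = (norm u)\<^sup>2 - (cmod a)\<^sup>2 / q"
      using \<open>q > 0\<close> by (simp add: field_simps power2_eq_square)
    finally show False using \<open>a \<noteq> 0\<close> \<open>q > 0\<close> by (simp add: divide_le_0_iff)
  qed
  then show ?thesis using pM by blast
qed

definition orth_proj :: "'a::chilbert_space set \<Rightarrow> 'a \<Rightarrow> 'a" where
  "orth_proj M x = (THE p. p \<in> M \<and> (\<forall>m\<in>M. cinner (x - p) m = 0))"

lemma orthogonal_decomposition_unique:
  assumes sub: "csubspace M" and "p \<in> M" "\<forall>m\<in>M. cinner (x - p) m = 0"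
    and "q \<in> M" "\<forall>m\<in>M. cinner (x - q) m = 0"
  shows "p = q"
proof -
  have "p - q \<in> M" using assms by (intro csubspace_diff) auto
  then have "cinner (x - q) (p - q) - cinner (x - p) (p - q) = 0" using assms by simp
  then have "cinner (p - q) (p - q) = 0" by (simp add: cinner_diff_left)
  then have "p - q = 0" using cinner_eq_zero_iff by blast
  then show ?thesis by simp
qed

locale closed_csubspace =
  fixes M :: "'a::chilbert_space set"
  assumes closed: "closed M" and csubspace: "csubspace M"
begin

lemma orth_proj_characterization: "orth_proj M x \<in> M \<and> (\<forall>m\<in>M. cinner (x - orth_proj M x) m = 0)"
proof -
  have "\<exists>!p. p \<in> M \<and> (\<forall>m\<in>M. cinner (x - p) m = 0)"
    using closed_csubspace_ex_orthogonal_decomposition [OF closed csubspace, of x]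
      orthogonal_decomposition_unique [OF csubspace] by blast
  then show ?thesis unfolding orth_proj_def by (rule theI')
qed

lemma orth_proj_in: "orth_proj M x \<in> M"
  using orth_proj_characterization by blast

lemma orth_proj_orthogonal: "m \<in> M \<Longrightarrow> cinner (x - orth_proj M x) m = 0"
  using orth_proj_characterization by blast

lemma orth_proj_orthogonal': "m \<in> M \<Longrightarrow> cinner m (x - orth_proj M x) = 0"
  using orth_proj_orthogonal by (metis cinner_commute complex_cnj_zero)

lemma orth_proj_eqI: "p \<in> M \<Longrightarrow> (\<And>m. m \<in> M \<Longrightarrow> cinner (x - p) m = 0) \<Longrightarrow> orth_proj M x = p"
  using orthogonal_decomposition_unique [OF csubspace] orth_proj_in orth_proj_orthogonal by blast

lemma orth_proj_id: "x \<in> M \<Longrightarrow> orth_proj M x = x"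
  by (rule orth_proj_eqI) simp_all

lemma orth_proj_idem: "orth_proj M (orth_proj M x) = orth_proj M x"
  by (rule orth_proj_id [OF orth_proj_in])

lemma orth_proj_eq_0_iff: "orth_proj M x = 0 \<longleftrightarrow> (\<forall>m\<in>M. cinner x m = 0)"
  using orth_proj_orthogonal [of _ x] orth_proj_eqI [of 0 x] csubspace_0 [OF csubspace] by auto

lemma orth_proj_add: "orth_proj M (x + y) = orth_proj M x + orth_proj M y"
proof (rule orth_proj_eqI)
  show "orth_proj M x + orth_proj M y \<in> M" by (rule csubspace_add [OF csubspace orth_proj_in orth_proj_in])
  fix m assume m: "m \<in> M"
  have e: "x + y - (orth_proj M x + orth_proj M y) = (x - orth_proj M x) + (y - orth_proj M y)" by simp
  show "cinner (x + y - (orth_proj M x + orth_proj M y)) m = 0"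
    unfolding e cinner_add_left orth_proj_orthogonal [OF m] by simp
qed

lemma orth_proj_scaleC: "orth_proj M (scaleC c x) = scaleC c (orth_proj M x)"
proof (rule orth_proj_eqI)
  show "scaleC c (orth_proj M x) \<in> M" by (rule csubspace_scaleC [OF csubspace orth_proj_in])
  fix m assume "m \<in> M"
  then show "cinner (scaleC c x - scaleC c (orth_proj M x)) m = 0"
    using orth_proj_orthogonal by (simp add: scaleC_diff_right [symmetric] cinner_scaleC_left)
qed

lemma norm_orth_proj_le: "norm (orth_proj M x) \<le> norm x"
proof -
  have "cinner (orth_proj M x) (x - orth_proj M x) = 0"
    using orth_proj_orthogonal' orth_proj_in by blast
  then have "(norm (orth_proj M x + (x - orth_proj M x)))\<^sup>2
      = (norm (orth_proj M x))\<^sup>2 + (norm (x - orth_proj M x))\<^sup>2"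
    by (rule pythagoras)
  then have "(norm (orth_proj M x))\<^sup>2 \<le> (norm x)\<^sup>2" by simp
  then show ?thesis by (rule power2_le_imp_le) simp
qed

lemma bounded_clinear_orth_proj: "bounded_clinear (orth_proj M)"
  by (rule bounded_clinearI [where K = 1]) (simp_all add: orth_proj_add orth_proj_scaleC norm_orth_proj_le)

lemma selfadjoint_orth_proj: "selfadjoint (orth_proj M)"
  unfolding selfadjoint_def
proof (intro conjI allI bounded_clinear_orth_proj)
  fix x y
  have "cinner (orth_proj M x) (y - orth_proj M y) = 0" by (rule orth_proj_orthogonal' [OF orth_proj_in])
  moreover have "cinner (x - orth_proj M x) (orth_proj M y) = 0" by (rule orth_proj_orthogonal [OF orth_proj_in])
  ultimately show "cinner (orth_proj M x) y = cinner x (orth_proj M y)"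
    by (simp add: cinner_diff_left cinner_diff_right)
qed

lemma range_orth_proj: "range (orth_proj M) = M"
  using orth_proj_in orth_proj_id by (metis image_subsetI subsetI subset_antisym rangeI)

lemma orth_proj_commute:
  assumes R: "selfadjoint R" and invariant: "\<And>m. m \<in> M \<Longrightarrow> R m \<in> M"
  shows "orth_proj M (R x) = R (orth_proj M x)"
proof (rule orth_proj_eqI)
  show "R (orth_proj M x) \<in> M" by (rule invariant [OF orth_proj_in])
  fix m assume m: "m \<in> M"
  have "cinner (R x - R (orth_proj M x)) m = cinner (x - orth_proj M x) (R m)"
    by (simp add: clinear_diff [OF selfadjoint_bounded_clinear [OF R], symmetric] selfadjointD [OF R])
  also have "\<dots> = 0" by (rule orth_proj_orthogonal [OF invariant [OF m]])
  finally show "cinner (R x - R (orth_proj M x)) m = 0" .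
qed

end

lemma closed_csubspace_kernel: "bounded_clinear T \<Longrightarrow> closed_csubspace {x. T x = 0}"
  unfolding closed_csubspace_def using closed_kernel csubspace_kernel by blast

lemma selfadjoint_idempotent_unique:
  assumes "selfadjoint Q1" "Q1 \<circ> Q1 = Q1" "selfadjoint Q2" "Q2 \<circ> Q2 = Q2" "range Q1 = range Q2"
  shows "Q1 = Q2"
proof
  fix x
  have Q1Q2: "Q1 (Q2 y) = Q2 y" and Q2Q1: "Q2 (Q1 y) = Q1 y" for y
    using assms(2,4,5) by (metis comp_apply rangeE rangeI)+
  show "Q1 x = Q2 x"
  proof (rule cinner_ext_left)
    fix y
    have "cinner (Q1 x) y = cinner (Q2 (Q1 x)) y" by (simp add: Q2Q1)
    also have "\<dots> = cinner x (Q1 (Q2 y))" using selfadjointD [OF assms(3)] selfadjointD [OF assms(1)] by simp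
    also have "\<dots> = cinner (Q2 x) y" using selfadjointD [OF assms(3)] by (simp add: Q1Q2)
    finally show "cinner (Q1 x) y = cinner (Q2 x) y" .
  qed
qed

lemma selfadjoint_vanishing_on_range_and_kernel:
  fixes A :: "'h::chilbert_space \<Rightarrow> 'h"
  assumes A: "selfadjoint A" and D: "bounded_clinear D"
    and range: "\<And>x. D (A x) = 0" and kernel: "\<And>x. A x = 0 \<Longrightarrow> D x = 0"
  shows "D x = 0"
proof -
  define M where "M = closure (range A)"
  interpret M: closed_csubspace M unfolding M_def
    using A by unfold_locales (simp_all add: csubspace_closure csubspace_range selfadjoint_bounded_clinear)
  \<comment> \<open>\<open>x\<close> splits into a limit of elements of \<open>range A\<close> and an element of \<open>range A\<^sup>\<bottom> = ker A\<close>.\<close>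
  have "closure (range A) \<subseteq> {v. D v = 0}"
    by (rule closure_minimal) (auto simp: range closed_kernel [OF D])
  then have "D (orth_proj M x) = 0" using M.orth_proj_in unfolding M_def by blast
  moreover have "cinner (A (x - orth_proj M x)) y = 0" for y
    using M.orth_proj_orthogonal [of "A y" x] closure_subset [of "range A"]
    unfolding M_def by (auto simp: selfadjointD [OF A])
  then have "D (x - orth_proj M x) = 0" using kernel cinner_eq_zero_iff by blast
  ultimately show ?thesis by (simp add: clinear_diff [OF D])
qed

section \<open>The Riesz representation and the transform \<open>hat\<close>\<close>

lemma Riesz_representation:
  fixes \<phi> :: "'c::chilbert_space \<Rightarrow> complex"
  assumes bl: "bounded_linear \<phi>" and scaleC: "\<And>a x. \<phi> (scaleC a x) = a * \<phi> x"
  shows "\<exists>c. \<forall>x. \<phi> x = cinner x c"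
proof (cases "\<forall>x. \<phi> x = 0")
  case True
  then show ?thesis by (intro exI [of _ 0]) simp
next
  case False
  then obtain y where y: "\<phi> y \<noteq> 0" by blast
  define N where "N = {x. \<phi> x = 0}"
  have lin: "linear \<phi>" using bl bounded_linear.linear by blast
  have "csubspace N" unfolding N_def csubspace_def
    by (simp add: linear_0 [OF lin] linear_add [OF lin] scaleC)
  moreover have "closed N" unfolding N_def
    by (rule closed_Collect_eq) (simp_all add: linear_continuous_on bl)
  ultimately interpret N: closed_csubspace N by unfold_locales
  \<comment> \<open>\<open>u\<close> spans the orthogonal complement of the kernel.\<close>
  define u where "u = y - orth_proj N y"
  have "\<phi> (orth_proj N y) = 0" using N.orth_proj_in unfolding N_def by blast
  then have phiu: "\<phi> u = \<phi> y" unfolding u_def by (simp add: linear_diff [OF lin])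
  then have "u \<noteq> 0" using y linear_0 [OF lin] by auto
  then have uu: "cinner u u \<noteq> 0" using cinner_eq_zero_iff by blast
  have "\<phi> x = cinner x (scaleC (cnj (\<phi> u / cinner u u)) u)" for x
  proof -
    define w where "w = x - scaleC (\<phi> x / \<phi> u) u"
    have "\<phi> w = 0" unfolding w_def using y phiu by (simp add: linear_diff [OF lin] scaleC)
    then have "cinner w u = 0" unfolding u_def using N.orth_proj_orthogonal' N_def by blast
    then have "cinner x u = (\<phi> x / \<phi> u) * cinner u u"
      unfolding w_def by (simp add: cinner_diff_left cinner_scaleC_left)
    then show ?thesis using uu y phiu by (simp add: cinner_scaleC_right field_simps)
  qed
  then show ?thesis by blast
qed

lemma ex1_adjoint_vector:
  fixes G :: "'c::chilbert_space \<Rightarrow> 'h::complex_inner"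
  assumes G: "bounded_clinear G"
  shows "\<exists>!c. \<forall>\<eta>. cinner c \<eta> = cinner h (G \<eta>)"
proof -
  have "bounded_linear (\<lambda>\<eta>. cinner (G \<eta>) h)"
    using bounded_linear_compose [OF bounded_linear_cinner_left bounded_clinear_bounded_linear [OF G]]
    by simp
  moreover have "cinner (G (scaleC a x)) h = a * cinner (G x) h" for a x
    by (simp add: clinear_scaleC [OF G] cinner_scaleC_left)
  ultimately obtain c where "\<And>x. cinner (G x) h = cinner x c"
    using Riesz_representation by blast
  then have c: "\<forall>\<eta>. cinner c \<eta> = cinner h (G \<eta>)"
    by (metis cinner_commute)
  show ?thesis
    by (rule ex1I [of _ c]) (use c in \<open>auto intro: cinner_ext_left\<close>)
qed

locale bounded_family =
  fixes g :: "'z \<Rightarrow> 'c::chilbert_space \<Rightarrow> 'h::chilbert_space"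
  assumes bounded_clinear_family: "\<And>z. bounded_clinear (g z)"
begin

lemma cinner_hat: "cinner (hat g h z) \<eta> = cinner h (g z \<eta>)"
  unfolding hat_def using theI' [OF ex1_adjoint_vector [OF bounded_clinear_family [of z], of h]] by simp

lemma hat_eqI: "(\<And>\<eta>. cinner c \<eta> = cinner h (g z \<eta>)) \<Longrightarrow> hat g h z = c"
  by (rule cinner_ext_left) (simp add: cinner_hat)

lemma hat_add: "hat g (h1 + h2) = (\<lambda>z. hat g h1 z + hat g h2 z)"
  by (intro ext hat_eqI) (simp add: cinner_add_left cinner_hat)

lemma hat_diff: "hat g (h1 - h2) = (\<lambda>z. hat g h1 z - hat g h2 z)"
  by (intro ext hat_eqI) (simp add: cinner_diff_left cinner_hat)

lemma hat_scaleC: "hat g (scaleC a h) = (\<lambda>z. scaleC a (hat g h z))"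
  by (intro ext hat_eqI) (simp add: cinner_scaleC_left cinner_hat)

lemma hat_zero: "hat g 0 = (\<lambda>z. 0)"
  by (intro ext hat_eqI) simp

lemma norm_hat_bound:
  obtains K where "K > 0" "\<And>h. norm (hat g h z) \<le> K * norm h"
proof -
  obtain K where K: "K > 0" "\<And>x. norm (g z x) \<le> norm x * K"
    using bounded_clinear_pos_bound [OF bounded_clinear_family] by blast
  have "norm (hat g h z) \<le> K * norm h" for h
  proof -
    define c where "c = hat g h z"
    have "(norm c)\<^sup>2 = Re (cinner h (g z c))" unfolding c_def by (simp add: cinner_hat flip: cinner_self_Re)
    also have "\<dots> \<le> norm h * norm (g z c)" using complex_Re_le_cmod cmod_cinner_le order_trans by blast
    also have "\<dots> \<le> norm h * (norm c * K)" using K(2) by (simp add: mult_left_mono)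
    finally have "norm c * norm c \<le> (K * norm h) * norm c" by (simp add: power2_eq_square mult_ac)
    then show ?thesis unfolding c_def [symmetric]
      using K(1) by (cases "norm c = 0") (auto simp: mult_le_cancel_right)
  qed
  then show ?thesis using K(1) that by blast
qed

lemma bounded_clinear_hat_compose:
  assumes "bounded_clinear T"
  shows "bounded_clinear (\<lambda>\<xi>. hat g (T (g w \<xi>)) z)"
proof -
  obtain K where K: "K > 0" "\<And>h. norm (hat g h z) \<le> K * norm h" using norm_hat_bound by blast
  have Tg: "bounded_clinear (\<lambda>\<xi>. T (g w \<xi>))"
    using bounded_clinear_compose [OF assms bounded_clinear_family] .
  obtain L where L: "\<And>x. norm (T (g w x)) \<le> norm x * L" using bounded_clinear_pos_bound [OF Tg] by blast
  show ?thesis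
  proof (rule bounded_clinearI [where K = "K * L"])
    fix x
    have "norm (hat g (T (g w x)) z) \<le> K * norm (T (g w x))" by (rule K(2))
    also have "\<dots> \<le> K * (norm x * L)" using K(1) L by (simp add: mult_left_mono)
    finally show "norm (hat g (T (g w x)) z) \<le> norm x * (K * L)" by (simp add: mult_ac)
  qed (simp_all add: clinear_add [OF Tg] clinear_scaleC [OF Tg] hat_add hat_scaleC)
qed

lemma hat_injective:
  assumes dense: "closure (cspan (\<Union>z. range (g z))) = UNIV"
    and eq: "hat g h1 = hat g h2"
  shows "h1 = h2"
proof -
  define W where "W = {v. cinner (h1 - h2) v = 0}"
  have "csubspace W" unfolding W_def csubspace_def
    by (simp add: cinner_add_right cinner_scaleC_right)
  moreover have "(\<Union>z. range (g z)) \<subseteq> W"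
  proof
    fix v assume "v \<in> (\<Union>z. range (g z))"
    then obtain z \<eta> where "v = g z \<eta>" by blast
    then show "v \<in> W"
      using cinner_hat [of h1 z \<eta>] cinner_hat [of h2 z \<eta>] eq
      unfolding W_def by (simp add: cinner_diff_left)
  qed
  ultimately have "cspan (\<Union>z. range (g z)) \<subseteq> W" unfolding cspan_def by blast
  moreover have "closed W" unfolding W_def
    by (rule closed_Collect_eq) (simp_all add: linear_continuous_on bounded_linear_cinner_right)
  ultimately have "closure (cspan (\<Union>z. range (g z))) \<subseteq> W" by (rule closure_minimal)
  then have "h1 - h2 \<in> W" using dense by blast
  then have "h1 - h2 = 0" unfolding W_def using cinner_eq_zero_iff by blast
  then show ?thesis by simp
qed

end

section \<open>Square roots of positive operators\<close>

text \<open>Taylor coefficients of \<open>\<surd>(1 - t)\<close>, and those of \<open>1 - \<surd>(1 - t)\<close>, which are nonnegative.\<close>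

definition sqrt_coeff :: "nat \<Rightarrow> real" where
  "sqrt_coeff n = (-1) ^ n * ((1/2) gchoose n)"

definition one_minus_sqrt_coeff :: "nat \<Rightarrow> real" where
  "one_minus_sqrt_coeff n = (if n = 0 then 0 else - sqrt_coeff n)"

lemma sqrt_coeff_0 [simp]: "sqrt_coeff 0 = 1"
  by (simp add: sqrt_coeff_def)

lemma one_minus_sqrt_coeff_0 [simp]: "one_minus_sqrt_coeff 0 = 0"
  by (simp add: one_minus_sqrt_coeff_def)

lemma one_gchoose: "(1::real) gchoose k = (if k = 0 then 1 else if k = 1 then 1 else 0)"
proof -
  have "(1::real) gchoose k = of_nat (1 choose k)"
    using binomial_gbinomial [of 1 k, where 'a=real] by (metis of_nat_1)
  then show ?thesis by (cases k) (auto simp: binomial_eq_0)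
qed

lemma sqrt_coeff_convolution:
  "(\<Sum>i\<le>k. sqrt_coeff i * sqrt_coeff (k - i)) = (if k = 0 then 1 else if k = 1 then -1 else 0)"
proof -
  have "sqrt_coeff i * sqrt_coeff (k - i) = (-1) ^ k * (((1/2) gchoose i) * ((1/2) gchoose (k - i)))"
    if "i \<le> k" for i
  proof -
    have "(-1::real) ^ i * (-1) ^ (k - i) = (-1) ^ k" using that by (simp flip: power_add)
    then show ?thesis unfolding sqrt_coeff_def by (metis mult.assoc mult.left_commute)
  qed
  then have "(\<Sum>i\<le>k. sqrt_coeff i * sqrt_coeff (k - i))
      = (-1) ^ k * (\<Sum>i\<le>k. ((1/2::real) gchoose i) * ((1/2) gchoose (k - i)))"
    by (simp add: sum_distrib_left)
  also have "\<dots> = (-1) ^ k * ((1::real) gchoose k)"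
    using gbinomial_Vandermonde [of "1/2::real" "1/2" k] by (simp add: atLeast0AtMost)
  finally show ?thesis by (simp add: one_gchoose)
qed

lemma sqrt_coeff_Suc: "sqrt_coeff (Suc k) = sqrt_coeff k * ((real k - 1/2) / (real k + 1))"
proof -
  have "(1/2::real) * ((1/2) gchoose k) = real k * ((1/2) gchoose k) + real (Suc k) * ((1/2) gchoose (Suc k))"
    by (rule gbinomial_mult_1)
  then have e: "((1/2::real) gchoose (Suc k)) = ((1/2) - real k) / (real k + 1) * ((1/2) gchoose k)"
    by (simp add: field_simps)
  show ?thesis unfolding sqrt_coeff_def power_Suc e by (simp add: field_simps)
qed

lemma sqrt_coeff_nonpos: "k \<ge> 1 \<Longrightarrow> sqrt_coeff k \<le> 0"
proof (induction k rule: nat_induct_at_least)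
  case base
  then show ?case by (simp add: sqrt_coeff_def)
next
  case (Suc n)
  then have "(real n - 1/2) / (real n + 1) \<ge> 0" by simp
  then show ?case unfolding sqrt_coeff_Suc using Suc.IH by (metis mult_nonpos_nonneg)
qed

lemma one_minus_sqrt_coeff_nonneg: "0 \<le> one_minus_sqrt_coeff n"
  unfolding one_minus_sqrt_coeff_def using sqrt_coeff_nonpos [of n] by simp

text \<open>The identity \<open>(1 - \<surd>(1 - t))\<^sup>2 = 2 (1 - \<surd>(1 - t)) - t\<close> on coefficients.\<close>

lemma one_minus_sqrt_coeff_convolution:
  "(\<Sum>i\<le>k. one_minus_sqrt_coeff i * one_minus_sqrt_coeff (k - i))
     = 2 * one_minus_sqrt_coeff k - (if k = 1 then 1 else 0)"
proof -
  define \<delta> :: "nat \<Rightarrow> real" where "\<delta> i = (if i = 0 then 1 else 0)" for i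
  have a: "one_minus_sqrt_coeff i = \<delta> i - sqrt_coeff i" for i
    unfolding one_minus_sqrt_coeff_def \<delta>_def by simp
  have "(\<Sum>i\<le>k. one_minus_sqrt_coeff i * one_minus_sqrt_coeff (k - i)) =
      (\<Sum>i\<le>k. \<delta> i * \<delta> (k - i)) - (\<Sum>i\<le>k. \<delta> i * sqrt_coeff (k - i))
      - (\<Sum>i\<le>k. sqrt_coeff i * \<delta> (k - i)) + (\<Sum>i\<le>k. sqrt_coeff i * sqrt_coeff (k - i))"
    unfolding a by (simp add: algebra_simps sum.distrib sum_subtractf)
  also have "(\<Sum>i\<le>k. \<delta> i * \<delta> (k - i)) = \<delta> k"
    by (simp add: \<delta>_def if_distrib [of "\<lambda>x. x * _"] cong: if_cong)
  also have "(\<Sum>i\<le>k. \<delta> i * sqrt_coeff (k - i)) = sqrt_coeff k"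
  proof -
    have "(\<Sum>i\<le>k. \<delta> i * sqrt_coeff (k - i)) = (\<Sum>i\<le>k. if i = 0 then sqrt_coeff (k - i) else 0)"
      by (rule sum.cong) (auto simp: \<delta>_def)
    then show ?thesis by (simp add: sum.delta)
  qed
  also have "(\<Sum>i\<le>k. sqrt_coeff i * \<delta> (k - i)) = sqrt_coeff k"
  proof -
    have "(\<Sum>i\<le>k. sqrt_coeff i * \<delta> (k - i)) = (\<Sum>i\<le>k. if i = k then sqrt_coeff i else 0)"
      by (rule sum.cong) (auto simp: \<delta>_def)
    then show ?thesis by (simp add: sum.delta)
  qed
  finally show ?thesis
    unfolding sqrt_coeff_convolution by (simp add: one_minus_sqrt_coeff_def \<delta>_def)
qed

lemma one_minus_sqrt_coeff_square:
  "(\<Sum>(i,j)\<in>{..<N}\<times>{..<N}. one_minus_sqrt_coeff i * one_minus_sqrt_coeff j)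
     = (\<Sum>n<N. one_minus_sqrt_coeff n)\<^sup>2"
  by (simp add: sum_product sum.cartesian_product power2_eq_square)

lemma one_minus_sqrt_coeff_triangle:
  assumes "N \<ge> 2"
  shows "(\<Sum>(i,j)\<in>{(i,j). i + j < N}. one_minus_sqrt_coeff i * one_minus_sqrt_coeff j)
     = 2 * (\<Sum>n<N. one_minus_sqrt_coeff n) - 1"
proof -
  have "(\<Sum>(i,j)\<in>{(i,j). i + j < N}. one_minus_sqrt_coeff i * one_minus_sqrt_coeff j)
      = (\<Sum>k<N. 2 * one_minus_sqrt_coeff k - (if k = 1 then 1 else 0))"
    by (simp add: sum.triangle_reindex one_minus_sqrt_coeff_convolution)
  also have "\<dots> = 2 * (\<Sum>n<N. one_minus_sqrt_coeff n) - 1"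
    using assms by (simp add: sum_subtractf sum_distrib_left sum.delta)
  finally show ?thesis .
qed

lemma one_minus_sqrt_coeff_triangle_le_square:
  "(\<Sum>(i,j)\<in>{(i,j). i + j < Suc N}. one_minus_sqrt_coeff i * one_minus_sqrt_coeff j)
     \<le> (\<Sum>n<N. one_minus_sqrt_coeff n)\<^sup>2"
proof -
  define f where "f = (\<lambda>(i, j). one_minus_sqrt_coeff i * one_minus_sqrt_coeff j)"
  have f_nonneg: "f p \<ge> 0" for p
    unfolding f_def by (cases p) (simp add: one_minus_sqrt_coeff_nonneg)
  \<comment> \<open>Terms with \<open>i = N\<close> or \<open>j = N\<close> have the other index \<open>0\<close>, and the \<open>0\<close>-th coefficient vanishes.\<close>
  have "sum f {(i,j). i + j < Suc N} = sum f ({(i,j). i + j < Suc N} \<inter> ({..<N} \<times> {..<N}))"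
  proof (rule sum.mono_neutral_right)
    show "finite {(i, j). i + j < Suc N}"
      by (rule finite_subset [of _ "{..N} \<times> {..N}"]) auto
    have "f (i, j) = 0" if "i + j < Suc N" "\<not> (i < N \<and> j < N)" for i j
    proof -
      have "i = 0 \<or> j = 0" using that by linarith
      then show ?thesis unfolding f_def by auto
    qed
    then show "\<forall>p\<in>{(i, j). i + j < Suc N} - {(i, j). i + j < Suc N} \<inter> {..<N} \<times> {..<N}. f p = 0"
      by auto
  qed auto
  also have "\<dots> \<le> sum f ({..<N} \<times> {..<N})"
    by (rule sum_mono2) (auto simp: f_nonneg)
  finally show ?thesis unfolding f_def one_minus_sqrt_coeff_square .
qed

lemma one_minus_sqrt_coeff_partial_sum_le: "(\<Sum>n<N. one_minus_sqrt_coeff n) \<le> 1"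
proof (induction N rule: nat_less_induct)
  case (1 N)
  show ?case
  proof (cases "N \<ge> 2")
    case True
    then obtain M where N: "N = Suc M" "M \<ge> 1" by (metis Suc_le_D Suc_1 Suc_le_mono)
    define S where "S = (\<Sum>n<M. one_minus_sqrt_coeff n)"
    have "0 \<le> S" "S \<le> 1"
      unfolding S_def using "1" N by (simp_all add: sum_nonneg one_minus_sqrt_coeff_nonneg)
    then have "S\<^sup>2 \<le> 1" by (simp add: power_le_one)
    then show ?thesis
      using one_minus_sqrt_coeff_triangle [OF True] one_minus_sqrt_coeff_triangle_le_square [of M]
      unfolding N S_def by linarith
  next
    case False
    then have "N = 0 \<or> N = 1" by auto
    then show ?thesis by auto
  qed
qed

lemma summable_one_minus_sqrt_coeff: "summable one_minus_sqrt_coeff"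
  by (rule summableI_nonneg_bounded [where x = 1])
    (simp_all add: one_minus_sqrt_coeff_nonneg one_minus_sqrt_coeff_partial_sum_le)

lemma suminf_one_minus_sqrt_coeff: "suminf one_minus_sqrt_coeff = 1"
proof -
  define s where "s = suminf one_minus_sqrt_coeff"
  have summable_norm: "summable (\<lambda>k. norm (one_minus_sqrt_coeff k))"
    using summable_one_minus_sqrt_coeff by (simp add: one_minus_sqrt_coeff_nonneg)
  have "s * s = (\<Sum>k. \<Sum>i\<le>k. one_minus_sqrt_coeff i * one_minus_sqrt_coeff (k - i))"
    unfolding s_def by (rule Cauchy_product [OF summable_norm summable_norm])
  also have "\<dots> = (\<Sum>k. 2 * one_minus_sqrt_coeff k - (if k = 1 then 1 else 0))"
    by (simp add: one_minus_sqrt_coeff_convolution)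
  also have "\<dots> = 2 * s - 1"
  proof (rule sums_unique [symmetric], rule sums_diff)
    show "(\<lambda>k. 2 * one_minus_sqrt_coeff k) sums (2 * s)"
      unfolding s_def using summable_one_minus_sqrt_coeff by (intro sums_mult summable_sums)
    show "(\<lambda>k::nat. if k = 1 then 1 else 0 :: real) sums 1"
      using sums_single [of 1 "\<lambda>_. 1::real"] by simp
  qed
  finally have "(s - 1)\<^sup>2 = 0" by (simp add: power2_eq_square algebra_simps)
  then show ?thesis unfolding s_def by simp
qed

text \<open>For a positive contraction \<open>A\<close> the series below is \<open>1 - \<surd>(1 - B)\<close> at \<open>B = I - A\<close>, so
  \<open>contraction_sqrt A\<close> is \<open>\<surd>A\<close>.\<close>

definition id_minus :: "('a::ab_group_add \<Rightarrow> 'a) \<Rightarrow> 'a \<Rightarrow> 'a" where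
  "id_minus A x = x - A x"

definition sqrt_series_partial :: "('h::complex_inner \<Rightarrow> 'h) \<Rightarrow> nat \<Rightarrow> 'h \<Rightarrow> 'h" where
  "sqrt_series_partial A N x = (\<Sum>n<N. scaleR (one_minus_sqrt_coeff n) ((id_minus A ^^ n) x))"

definition sqrt_series :: "('h::chilbert_space \<Rightarrow> 'h) \<Rightarrow> 'h \<Rightarrow> 'h" where
  "sqrt_series A x = (\<Sum>n. scaleR (one_minus_sqrt_coeff n) ((id_minus A ^^ n) x))"

definition contraction_sqrt :: "('h::chilbert_space \<Rightarrow> 'h) \<Rightarrow> 'h \<Rightarrow> 'h" where
  "contraction_sqrt A x = x - sqrt_series A x"

locale positive_contraction =
  fixes A :: "'h::chilbert_space \<Rightarrow> 'h"
  assumes positive: "positive_op A" and contraction: "\<And>x. norm (A x) \<le> norm x"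
begin

abbreviation B :: "'h \<Rightarrow> 'h" where "B \<equiv> id_minus A"

lemma selfadjoint: "selfadjoint A"
  using positive by (rule positive_op_selfadjoint)

lemma bounded_clinear: "bounded_clinear A"
  using selfadjoint by (rule selfadjoint_bounded_clinear)

lemma norm_squared_le_cinner: "(norm (A x))\<^sup>2 \<le> Re (cinner (A x) x)"
proof -
  define n where "n = norm (A x)"
  have "(n\<^sup>2)\<^sup>2 = (cmod (cinner (A x) (A x)))\<^sup>2"
    unfolding n_def by (simp add: cinner_self norm_power flip: of_real_power)
  also have "\<dots> \<le> Re (cinner (A x) x) * Re (cinner (A (A x)) (A x))"
    by (rule positive_op_Cauchy_Schwarz [OF positive])
  also have "\<dots> \<le> Re (cinner (A x) x) * n\<^sup>2"
  proof (rule mult_left_mono)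
    have "Re (cinner (A (A x)) (A x)) \<le> norm (A (A x)) * norm (A x)"
      using complex_Re_le_cmod cmod_cinner_le order_trans by blast
    then show "Re (cinner (A (A x)) (A x)) \<le> n\<^sup>2"
      unfolding n_def using contraction mult_right_mono order_trans power2_eq_square
      by (metis norm_ge_zero)
  qed (rule positive_opD [OF positive])
  finally have h: "n\<^sup>2 * n\<^sup>2 \<le> Re (cinner (A x) x) * n\<^sup>2" by (simp only: power2_eq_square)
  show ?thesis
  proof (cases "n = 0")
    case True
    then show ?thesis using positive_opD [OF positive, of x] by (simp add: n_def)
  next
    case False
    then have "0 < n\<^sup>2" by simp
    then show ?thesis using mult_right_le_imp_le [OF h] by (simp add: n_def)
  qed
qed

lemma bounded_clinear_B: "bounded_clinear B"
  unfolding id_minus_def [abs_def] by (rule bounded_clinear_sub [OF bounded_clinear_ident bounded_clinear])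

lemma selfadjoint_B: "selfadjoint B"
  unfolding id_minus_def [abs_def] by (rule selfadjoint_diff [OF selfadjoint_ident selfadjoint])

lemma norm_B_le: "norm (B x) \<le> norm x"
proof -
  have "Re (cinner x (A x)) = Re (cinner (A x) x)"
    using arg_cong [OF cinner_commute [of x "A x"], of Re] by simp
  then have "(norm (B x))\<^sup>2 = (norm x)\<^sup>2 - 2 * Re (cinner (A x) x) + (norm (A x))\<^sup>2"
    by (simp add: id_minus_def cinner_diff_left cinner_diff_right flip: cinner_self_Re)
  also have "\<dots> \<le> (norm x)\<^sup>2"
    using norm_squared_le_cinner [of x] positive_opD [OF positive, of x] by simp
  finally show ?thesis by (rule power2_le_imp_le) simp
qed

lemma bounded_clinear_B_pow: "bounded_clinear (B ^^ n)"
  by (induction n) (simp_all add: bounded_clinear_ident id_def comp_def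
      bounded_clinear_compose [OF bounded_clinear_B])

lemma cinner_B_pow: "cinner ((B ^^ n) x) y = cinner x ((B ^^ n) y)"
proof (induction n arbitrary: y)
  case (Suc n)
  have "cinner ((B ^^ Suc n) x) y = cinner ((B ^^ n) x) (B y)"
    by (simp add: selfadjointD [OF selfadjoint_B])
  also have "\<dots> = cinner x ((B ^^ Suc n) y)" by (simp add: Suc.IH funpow_swap1)
  finally show ?case .
qed simp

lemma norm_B_pow_le: "norm ((B ^^ n) x) \<le> norm x"
  by (induction n) (auto intro: order_trans [OF norm_B_le])

lemma B_pow_commute:
  assumes "bounded_clinear U" "\<And>x. U (A x) = A (U x)"
  shows "U ((B ^^ n) x) = (B ^^ n) (U x)"
  by (induction n) (simp_all add: id_minus_def clinear_diff [OF assms(1)] assms(2))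

lemma norm_sqrt_series_term_le:
  "norm (scaleR (one_minus_sqrt_coeff n) ((B ^^ n) x)) \<le> one_minus_sqrt_coeff n * norm x"
  using norm_B_pow_le [of n x] one_minus_sqrt_coeff_nonneg [of n] by (simp add: mult_left_mono)

lemma summable_sqrt_series: "summable (\<lambda>n. scaleR (one_minus_sqrt_coeff n) ((B ^^ n) x))"
  by (rule summable_comparison_test' [where N = 0,
        OF summable_mult2 [OF summable_one_minus_sqrt_coeff] norm_sqrt_series_term_le])

lemma sqrt_series_partial_tendsto: "(\<lambda>N. sqrt_series_partial A N x) \<longlonglongrightarrow> sqrt_series A x"
  unfolding sqrt_series_partial_def sqrt_series_def by (rule summable_LIMSEQ [OF summable_sqrt_series])

lemma norm_sqrt_series_partial_le: "norm (sqrt_series_partial A N x) \<le> norm x"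
proof -
  have "norm (sqrt_series_partial A N x) \<le> (\<Sum>n<N. one_minus_sqrt_coeff n * norm x)"
    unfolding sqrt_series_partial_def
    by (rule order_trans [OF norm_sum sum_mono [OF norm_sqrt_series_term_le]])
  also have "\<dots> \<le> 1 * norm x"
    unfolding sum_distrib_right [symmetric]
    by (rule mult_right_mono [OF one_minus_sqrt_coeff_partial_sum_le]) simp
  finally show ?thesis by simp
qed

lemma sqrt_series_partial_diff:
  "sqrt_series_partial A N (x - y) = sqrt_series_partial A N x - sqrt_series_partial A N y"
  unfolding sqrt_series_partial_def
  by (simp add: clinear_diff [OF bounded_clinear_B_pow] scaleR_diff_right sum_subtractf)

lemma norm_sqrt_series_le: "norm (sqrt_series A x) \<le> norm x"
  by (rule LIMSEQ_le_const2 [OF tendsto_norm [OF sqrt_series_partial_tendsto]])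
    (simp add: norm_sqrt_series_partial_le)

lemma bounded_clinear_sqrt_series: "bounded_clinear (sqrt_series A)"
proof (rule bounded_clinearI [where K = 1])
  fix x y c
  show "sqrt_series A (x + y) = sqrt_series A x + sqrt_series A y"
    unfolding sqrt_series_def
    by (simp add: clinear_add [OF bounded_clinear_B_pow] scaleR_add_right
        suminf_add [OF summable_sqrt_series summable_sqrt_series])
  show "sqrt_series A (scaleC c x) = scaleC c (sqrt_series A x)"
    unfolding sqrt_series_def bounded_linear.suminf [OF bounded_linear_scaleC summable_sqrt_series]
    by (simp add: clinear_scaleC [OF bounded_clinear_B_pow] scaleC_scaleR_commute)
qed (simp add: norm_sqrt_series_le)

lemma cinner_sqrt_series: "cinner (sqrt_series A x) y = cinner x (sqrt_series A y)"
  unfolding sqrt_series_def suminf_cinner_left [OF summable_sqrt_series]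
    suminf_cinner_right [OF summable_sqrt_series]
  by (simp add: cinner_scaleR_left cinner_scaleR_right cinner_B_pow)

lemma sqrt_series_commute:
  assumes "bounded_clinear U" "\<And>x. U (A x) = A (U x)"
  shows "U (sqrt_series A x) = sqrt_series A (U x)"
  unfolding sqrt_series_def clinear_suminf [OF assms(1) summable_sqrt_series]
  by (simp add: clinear_scaleR [OF assms(1)] B_pow_commute [OF assms])

lemma sqrt_series_partial_square:
  "sqrt_series_partial A N (sqrt_series_partial A N x)
     = (\<Sum>(i,j)\<in>{..<N}\<times>{..<N}. scaleR (one_minus_sqrt_coeff i * one_minus_sqrt_coeff j) ((B ^^ (i + j)) x))"
  unfolding sqrt_series_partial_def
  by (simp add: clinear_sum [OF bounded_clinear_B_pow] clinear_scaleR [OF bounded_clinear_B_pow]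
      scaleR_sum_right funpow_add sum.cartesian_product)

lemma sqrt_series_partial_triangle:
  assumes "N \<ge> 2"
  shows "(\<Sum>(i,j)\<in>{(i,j). i + j < N}. scaleR (one_minus_sqrt_coeff i * one_minus_sqrt_coeff j) ((B ^^ (i + j)) x))
    = scaleR 2 (sqrt_series_partial A N x) - B x"
proof -
  have "(\<Sum>(i,j)\<in>{(i,j). i + j < N}. scaleR (one_minus_sqrt_coeff i * one_minus_sqrt_coeff j) ((B ^^ (i + j)) x))
      = (\<Sum>k<N. scaleR (\<Sum>i\<le>k. one_minus_sqrt_coeff i * one_minus_sqrt_coeff (k - i)) ((B ^^ k) x))"
    by (simp add: sum.triangle_reindex scaleR_sum_left)
  also have "\<dots> = (\<Sum>k<N. scaleR (2 * one_minus_sqrt_coeff k) ((B ^^ k) x) - (if k = 1 then B x else 0))"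
    by (rule sum.cong) (simp_all add: one_minus_sqrt_coeff_convolution scaleR_diff_left)
  also have "\<dots> = scaleR 2 (sqrt_series_partial A N x) - B x"
    using assms by (simp add: sum_subtractf sqrt_series_partial_def scaleR_sum_right sum.delta)
  finally show ?thesis .
qed

lemma norm_sqrt_series_partial_square_error:
  assumes N: "N \<ge> 2"
  shows "norm (sqrt_series_partial A N (sqrt_series_partial A N x) - (scaleR 2 (sqrt_series_partial A N x) - B x))
    \<le> ((\<Sum>n<N. one_minus_sqrt_coeff n) - 1)\<^sup>2 * norm x"
proof -
  define F where "F = (\<lambda>(i,j). scaleR (one_minus_sqrt_coeff i * one_minus_sqrt_coeff j) ((B ^^ (i + j)) x))"
  define G where "G = (\<lambda>(i,j). one_minus_sqrt_coeff i * one_minus_sqrt_coeff j)"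
  define box where "box = {..<N} \<times> {..<N}"
  define tri where "tri = {(i::nat,j::nat). i + j < N}"
  have fin: "finite box" and sub: "tri \<subseteq> box" unfolding tri_def box_def by auto
  have FG: "norm (F p) \<le> G p * norm x" for p
    unfolding F_def G_def using norm_B_pow_le one_minus_sqrt_coeff_nonneg
    by (cases p) (simp add: mult_left_mono)
  have "sqrt_series_partial A N (sqrt_series_partial A N x) - (scaleR 2 (sqrt_series_partial A N x) - B x)
      = sum F box - sum F tri"
    unfolding sqrt_series_partial_square sqrt_series_partial_triangle [OF N, symmetric] F_def box_def tri_def
    by simp
  also have "\<dots> = sum F (box - tri)" by (rule sum_diff [OF fin sub, symmetric])
  finally have "norm (sqrt_series_partial A N (sqrt_series_partial A N x) - (scaleR 2 (sqrt_series_partial A N x) - B x))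
      = norm (sum F (box - tri))" by simp
  also have "\<dots> \<le> (\<Sum>p\<in>box - tri. G p * norm x)"
    by (rule order_trans [OF norm_sum sum_mono [OF FG]])
  also have "\<dots> = (sum G box - sum G tri) * norm x"
    by (simp add: sum_distrib_right [symmetric] sum_diff [OF fin sub])
  also have "sum G box - sum G tri = ((\<Sum>n<N. one_minus_sqrt_coeff n) - 1)\<^sup>2"
    unfolding G_def box_def tri_def one_minus_sqrt_coeff_square one_minus_sqrt_coeff_triangle [OF N]
    by (simp add: power2_eq_square algebra_simps)
  finally show ?thesis .
qed

lemma sqrt_series_square: "sqrt_series A (sqrt_series A x) = scaleR 2 (sqrt_series A x) - B x"
proof -
  let ?T = "sqrt_series_partial A"
  have "(\<lambda>N. norm (?T N x - sqrt_series A x)) \<longlonglongrightarrow> 0"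
    by (rule tendsto_norm_zero [OF LIM_zero [OF sqrt_series_partial_tendsto]])
  then have "(\<lambda>N. ?T N (?T N x - sqrt_series A x)) \<longlonglongrightarrow> 0"
    by (rule Lim_null_comparison [rotated]) (simp add: norm_sqrt_series_partial_le)
  then have "(\<lambda>N. ?T N (sqrt_series A x) + ?T N (?T N x - sqrt_series A x))
      \<longlonglongrightarrow> sqrt_series A (sqrt_series A x) + 0"
    by (rule tendsto_add [OF sqrt_series_partial_tendsto])
  then have lim1: "(\<lambda>N. ?T N (?T N x)) \<longlonglongrightarrow> sqrt_series A (sqrt_series A x)"
    by (simp add: sqrt_series_partial_diff)
  have "(\<lambda>N. ((\<Sum>n<N. one_minus_sqrt_coeff n) - 1)\<^sup>2 * norm x) \<longlonglongrightarrow> (1 - 1)\<^sup>2 * norm x"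
    using summable_LIMSEQ [OF summable_one_minus_sqrt_coeff]
    by (intro tendsto_intros) (simp add: suminf_one_minus_sqrt_coeff)
  then have "(\<lambda>N. ((\<Sum>n<N. one_minus_sqrt_coeff n) - 1)\<^sup>2 * norm x) \<longlonglongrightarrow> 0" by simp
  then have "(\<lambda>N. ?T N (?T N x) - (scaleR 2 (?T N x) - B x)) \<longlonglongrightarrow> 0"
    by (rule Lim_null_comparison [rotated])
      (use norm_sqrt_series_partial_square_error eventually_sequentially in auto)
  moreover have "(\<lambda>N. scaleR 2 (?T N x) - B x) \<longlonglongrightarrow> scaleR 2 (sqrt_series A x) - B x"
    by (intro tendsto_intros sqrt_series_partial_tendsto)
  ultimately have "(\<lambda>N. (scaleR 2 (?T N x) - B x) + (?T N (?T N x) - (scaleR 2 (?T N x) - B x)))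
      \<longlonglongrightarrow> (scaleR 2 (sqrt_series A x) - B x) + 0"
    using tendsto_add by blast
  then have lim2: "(\<lambda>N. ?T N (?T N x)) \<longlonglongrightarrow> scaleR 2 (sqrt_series A x) - B x"
    by simp
  show ?thesis using LIMSEQ_unique [OF lim1 lim2] .
qed

lemma bounded_clinear_contraction_sqrt: "bounded_clinear (contraction_sqrt A)"
  unfolding contraction_sqrt_def [abs_def]
  by (rule bounded_clinear_sub [OF bounded_clinear_ident bounded_clinear_sqrt_series])

lemma positive_op_contraction_sqrt: "positive_op (contraction_sqrt A)"
  unfolding positive_op_def selfadjoint_def
proof (intro conjI allI bounded_clinear_contraction_sqrt)
  fix x y
  show "cinner (contraction_sqrt A x) y = cinner x (contraction_sqrt A y)"
    by (simp add: contraction_sqrt_def cinner_diff_left cinner_diff_right cinner_sqrt_series)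
  have "Re (cinner (sqrt_series A x) x) \<le> norm (sqrt_series A x) * norm x"
    using complex_Re_le_cmod cmod_cinner_le order_trans by blast
  also have "\<dots> \<le> (norm x)\<^sup>2"
    unfolding power2_eq_square by (rule mult_right_mono [OF norm_sqrt_series_le]) simp
  finally show "0 \<le> Re (cinner (contraction_sqrt A x) x)"
    by (simp add: contraction_sqrt_def cinner_diff_left cinner_self_Re)
qed

lemma contraction_sqrt_square: "contraction_sqrt A (contraction_sqrt A x) = A x"
  using sqrt_series_square [of x]
  by (simp add: contraction_sqrt_def id_minus_def clinear_diff [OF bounded_clinear_sqrt_series]
      scaleR_2 algebra_simps)

lemma contraction_sqrt_commute:
  assumes "bounded_clinear U" "\<And>x. U (A x) = A (U x)"
  shows "U (contraction_sqrt A x) = contraction_sqrt A (U x)"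
  unfolding contraction_sqrt_def by (simp add: clinear_diff [OF assms(1)] sqrt_series_commute [OF assms])

end

definition commuting_sqrt :: "('h::complex_inner \<Rightarrow> 'h) \<Rightarrow> ('h \<Rightarrow> 'h) \<Rightarrow> bool" where
  "commuting_sqrt A S \<longleftrightarrow> positive_op S \<and> S \<circ> S = A \<and>
     (\<forall>U. bounded_clinear U \<and> (\<forall>x. U (A x) = A (U x)) \<longrightarrow> (\<forall>x. U (S x) = S (U x)))"

lemma ex_commuting_sqrt:
  fixes A :: "'h::chilbert_space \<Rightarrow> 'h"
  assumes A: "positive_op A"
  shows "\<exists>S. commuting_sqrt A S"
proof -
  have sa: "selfadjoint A" using A by (rule positive_op_selfadjoint)
  obtain K where K: "K > 0" "\<And>x. norm (A x) \<le> norm x * K"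
    using bounded_clinear_pos_bound [OF selfadjoint_bounded_clinear [OF sa]] by blast
  define A1 where "A1 = (\<lambda>x. scaleR (1 / K) (A x))"
  have "positive_op A1"
    unfolding A1_def using A K(1) by (simp add: positive_op_scaleR)
  moreover have "norm (A1 x) \<le> norm x" for x
    unfolding A1_def using K by (simp add: divide_le_eq)
  ultimately interpret A1: positive_contraction A1 by unfold_locales
  define S where "S = (\<lambda>x. scaleR (sqrt K) (contraction_sqrt A1 x))"
  have "positive_op S"
    unfolding S_def using K(1) by (simp add: positive_op_scaleR A1.positive_op_contraction_sqrt)
  moreover have "S \<circ> S = A"
  proof
    fix x
    have "(S \<circ> S) x = scaleR (sqrt K * sqrt K) (contraction_sqrt A1 (contraction_sqrt A1 x))"
      unfolding S_def by (simp add: clinear_scaleR [OF A1.bounded_clinear_contraction_sqrt])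
    also have "\<dots> = scaleR K (A1 x)" using K(1) by (simp add: A1.contraction_sqrt_square)
    also have "\<dots> = A x" using K(1) unfolding A1_def by simp
    finally show "(S \<circ> S) x = A x" .
  qed
  moreover have "U (S x) = S (U x)"
    if U: "bounded_clinear U" "\<forall>x. U (A x) = A (U x)" for U x
    using A1.contraction_sqrt_commute [OF U(1), of x] U
    unfolding S_def A1_def by (simp add: clinear_scaleR)
  ultimately show ?thesis unfolding commuting_sqrt_def by blast
qed

lemma positive_sqrt_unique:
  fixes A :: "'h::chilbert_space \<Rightarrow> 'h"
  assumes S: "commuting_sqrt A S" and B: "positive_op B" and BB: "B \<circ> B = A"
  shows "B = S"
proof -
  have Spos: "positive_op S" and SS: "S \<circ> S = A" using S unfolding commuting_sqrt_def by auto
  have Ssa: "selfadjoint S" and Bsa: "selfadjoint B"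
    using Spos B by (simp_all add: positive_op_selfadjoint)
  have Sbc: "bounded_clinear S" and Bbc: "bounded_clinear B"
    using Ssa Bsa by (simp_all add: selfadjoint_bounded_clinear)
  have BS: "B (S x) = S (B x)" for x
    using S Bbc BB unfolding commuting_sqrt_def by (metis comp_apply)
  have Ax: "A x = S (S x)" "A x = B (B x)" for x using SS BB by (metis comp_apply)+
  define D where "D = (\<lambda>x. S x - B x)"
  \<comment> \<open>\<open>S D + B D = S\<^sup>2 - B\<^sup>2 = 0\<close> with \<open>S, B \<ge> 0\<close> forces \<open>S D = B D = 0\<close>, hence \<open>D\<^sup>2 = 0\<close>.\<close>
  have sum0: "S (D x) + B (D x) = 0" for x
    unfolding D_def by (simp add: clinear_diff [OF Sbc] clinear_diff [OF Bbc] BS flip: Ax)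
  have "Re (cinner (S (D x)) (D x)) + Re (cinner (B (D x)) (D x)) = 0" for x
    using arg_cong [OF sum0 [of x], of "\<lambda>v. Re (cinner v (D x))"] by (simp add: cinner_add_left)
  then have "S (D x) = 0" "B (D x) = 0" for x
    using positive_opD [OF Spos] positive_opD [OF B] positive_op_eq_0 [OF Spos] positive_op_eq_0 [OF B]
    by (metis add_nonneg_eq_0_iff)+
  then have "cinner (D x) (D x) = 0" for x
    by (simp add: D_def cinner_diff_left selfadjointD [OF Ssa] selfadjointD [OF Bsa]
        flip: cinner_diff_right)
  then have "D x = 0" for x using cinner_eq_zero_iff by blast
  then show ?thesis unfolding D_def by (auto simp: fun_eq_iff)
qed

lemma op_sqrt_commuting_sqrt:
  fixes A :: "'h::chilbert_space \<Rightarrow> 'h"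
  assumes "positive_op A"
  shows "commuting_sqrt A (op_sqrt A)"
proof -
  obtain S where S: "commuting_sqrt A S" using ex_commuting_sqrt [OF assms] by blast
  have "op_sqrt A = S" unfolding op_sqrt_def
  proof (rule the_equality)
    show "positive_op S \<and> S \<circ> S = A" using S unfolding commuting_sqrt_def by blast
  qed (use positive_sqrt_unique [OF S] in blast)
  with S show ?thesis by simp
qed

section \<open>Absolute value, sign and kernel projection of a self-adjoint operator\<close>

lemma selfadjoint_square_eq_0_iff:
  assumes "selfadjoint S"
  shows "S (S x) = 0 \<longleftrightarrow> S x = 0"
proof
  assume "S (S x) = 0"
  then have "(norm (S x))\<^sup>2 = 0"
    by (simp only: cinner_self_Re [symmetric] selfadjointD [OF assms, of "S x" x, symmetric]) simp
  then show "S x = 0" by simp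
qed (simp add: clinear_zero [OF selfadjoint_bounded_clinear [OF assms]])

text \<open>For self-adjoint \<open>Q\<close>, the orthogonal projection onto the closure of the range of \<open>Q\<close>.\<close>

definition support_proj :: "('h::chilbert_space \<Rightarrow> 'h) \<Rightarrow> 'h \<Rightarrow> 'h" where
  "support_proj Q x = x - orth_proj {x. Q x = 0} x"

context
  fixes Q :: "'h::chilbert_space \<Rightarrow> 'h"
  assumes Q: "selfadjoint Q"
begin

interpretation ker: closed_csubspace "{x. Q x = 0}"
  by (rule closed_csubspace_kernel [OF selfadjoint_bounded_clinear [OF Q]])

lemma selfadjoint_support_proj: "selfadjoint (support_proj Q)"
  unfolding support_proj_def [abs_def]
  by (rule selfadjoint_diff [OF selfadjoint_ident ker.selfadjoint_orth_proj])

lemma bounded_clinear_support_proj: "bounded_clinear (support_proj Q)"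
  by (rule selfadjoint_bounded_clinear [OF selfadjoint_support_proj])

lemma support_proj_eq_0_iff: "support_proj Q x = 0 \<longleftrightarrow> Q x = 0"
proof -
  have "support_proj Q x = 0 \<longleftrightarrow> orth_proj {x. Q x = 0} x = x" unfolding support_proj_def by auto
  also have "\<dots> \<longleftrightarrow> Q x = 0" using ker.orth_proj_in ker.orth_proj_id by (metis mem_Collect_eq)
  finally show ?thesis .
qed

lemma support_proj_idem: "support_proj Q (support_proj Q x) = support_proj Q x"
  unfolding support_proj_def
  using ker.orth_proj_idem clinear_diff [OF ker.bounded_clinear_orth_proj] by simp

lemma apply_support_proj: "Q (support_proj Q x) = Q x"
  using ker.orth_proj_in [of x]
  unfolding support_proj_def by (simp add: clinear_diff [OF selfadjoint_bounded_clinear [OF Q]])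

lemma support_proj_apply: "support_proj Q (Q y) = Q y"
proof -
  have "orth_proj {x. Q x = 0} (Q y) = 0"
    unfolding ker.orth_proj_eq_0_iff by (simp add: selfadjointD [OF Q])
  then show ?thesis unfolding support_proj_def by simp
qed

lemma support_proj_annihilated: "Q y = 0 \<Longrightarrow> support_proj Q y = 0"
  by (simp add: support_proj_eq_0_iff)

lemma apply_support_proj_annihilated:
  assumes "selfadjoint Q'" and "\<And>y. Q (Q' y) = 0"
  shows "Q' (support_proj Q x) = 0"
proof -
  have "cinner (Q' (support_proj Q x)) y = 0" for y
    using assms by (simp add: selfadjointD [OF assms(1)] selfadjointD [OF selfadjoint_support_proj]
        support_proj_annihilated)
  then show ?thesis using cinner_eq_zero_iff by blast
qed

lemma support_proj_commute:
  assumes "selfadjoint R" and "\<And>x. R (Q x) = Q (R x)"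
  shows "R (support_proj Q x) = support_proj Q (R x)"
proof -
  have "orth_proj {x. Q x = 0} (R x) = R (orth_proj {x. Q x = 0} x)"
    using assms clinear_zero [OF selfadjoint_bounded_clinear [OF assms(1)]]
    by (intro ker.orth_proj_commute) (auto simp flip: assms(2))
  then show ?thesis
    unfolding support_proj_def by (simp add: clinear_diff [OF selfadjoint_bounded_clinear [OF assms(1)]])
qed

end

text \<open>With \<open>P = P\<^sub>+ - P\<^sub>-\<close> and \<open>|P| = P\<^sub>+ + P\<^sub>-\<close>, where \<open>P\<^sub>+ P\<^sub>- = 0\<close>, the sign of \<open>P\<close> is the
  difference of the support projections of \<open>P\<^sub>+\<close> and \<open>P\<^sub>-\<close>.\<close>

locale selfadjoint_operator =
  fixes P :: "'h::chilbert_space \<Rightarrow> 'h"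
  assumes selfadjoint: "selfadjoint P"
begin

abbreviation absP :: "'h \<Rightarrow> 'h" where "absP \<equiv> op_abs P"
abbreviation sqrt_absP :: "'h \<Rightarrow> 'h" where "sqrt_absP \<equiv> op_sqrtabs P"

lemma bounded_clinear: "bounded_clinear P"
  using selfadjoint by (rule selfadjoint_bounded_clinear)

lemma positive_op_square: "positive_op (P \<circ> P)"
  unfolding positive_op_def
proof (intro conjI allI)
  show "selfadjoint (P \<circ> P)" using selfadjoint_compose [OF selfadjoint selfadjoint] by (simp add: comp_def)
  show "0 \<le> Re (cinner ((P \<circ> P) x) x)" for x
    by (simp only: comp_apply selfadjointD [OF selfadjoint, of "P x" x] cinner_self_Re zero_le_power2)
qed

lemma commuting_sqrt_absP: "commuting_sqrt (P \<circ> P) absP"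
  unfolding op_abs_def by (rule op_sqrt_commuting_sqrt [OF positive_op_square])

lemma positive_op_absP: "positive_op absP"
  using commuting_sqrt_absP unfolding commuting_sqrt_def by blast

lemma selfadjoint_absP: "selfadjoint absP"
  using positive_op_absP by (rule positive_op_selfadjoint)

lemma bounded_clinear_absP: "bounded_clinear absP"
  using selfadjoint_absP by (rule selfadjoint_bounded_clinear)

lemma absP_absP: "absP (absP x) = P (P x)"
  using commuting_sqrt_absP unfolding commuting_sqrt_def by (metis comp_apply)

lemma P_absP_commute: "P (absP x) = absP (P x)"
  using commuting_sqrt_absP bounded_clinear unfolding commuting_sqrt_def by simp

lemma commuting_sqrt_sqrt_absP: "commuting_sqrt absP sqrt_absP"
  unfolding op_sqrtabs_def by (rule op_sqrt_commuting_sqrt [OF positive_op_absP])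

lemma positive_op_sqrt_absP: "positive_op sqrt_absP"
  using commuting_sqrt_sqrt_absP unfolding commuting_sqrt_def by blast

lemma selfadjoint_sqrt_absP: "selfadjoint sqrt_absP"
  using positive_op_sqrt_absP by (rule positive_op_selfadjoint)

lemma bounded_clinear_sqrt_absP: "bounded_clinear sqrt_absP"
  using selfadjoint_sqrt_absP by (rule selfadjoint_bounded_clinear)

lemma sqrt_absP_sqrt_absP: "sqrt_absP (sqrt_absP x) = absP x"
  using commuting_sqrt_sqrt_absP unfolding commuting_sqrt_def by (metis comp_apply)

lemma P_sqrt_absP_commute: "P (sqrt_absP x) = sqrt_absP (P x)"
  using commuting_sqrt_sqrt_absP bounded_clinear P_absP_commute
  unfolding commuting_sqrt_def by simp

lemma absP_eq_0_iff: "absP x = 0 \<longleftrightarrow> P x = 0"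
  using selfadjoint_square_eq_0_iff [OF selfadjoint_absP, of x]
    selfadjoint_square_eq_0_iff [OF selfadjoint, of x]
  by (simp add: absP_absP)

lemma sqrt_absP_eq_0_iff: "sqrt_absP x = 0 \<longleftrightarrow> P x = 0"
  using selfadjoint_square_eq_0_iff [OF selfadjoint_sqrt_absP, of x]
  by (simp add: sqrt_absP_sqrt_absP absP_eq_0_iff)

definition pos_part :: "'h \<Rightarrow> 'h" where "pos_part = (\<lambda>x. scaleR (1/2) (absP x + P x))"
definition neg_part :: "'h \<Rightarrow> 'h" where "neg_part = (\<lambda>x. scaleR (1/2) (absP x - P x))"

lemma selfadjoint_pos_part: "selfadjoint pos_part"
  unfolding pos_part_def by (rule selfadjoint_scaleR [OF selfadjoint_add [OF selfadjoint_absP selfadjoint]])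

lemma selfadjoint_neg_part: "selfadjoint neg_part"
  unfolding neg_part_def by (rule selfadjoint_scaleR [OF selfadjoint_diff [OF selfadjoint_absP selfadjoint]])

lemma pos_part_neg_part: "pos_part (neg_part x) = 0"
  unfolding pos_part_def neg_part_def
  by (simp add: clinear_scaleR [OF bounded_clinear_absP] clinear_scaleR [OF bounded_clinear]
      clinear_diff [OF bounded_clinear_absP] clinear_diff [OF bounded_clinear]
      absP_absP P_absP_commute scaleR_diff_right scaleR_add_right)

lemma neg_part_pos_part: "neg_part (pos_part x) = 0"
  unfolding pos_part_def neg_part_def
  by (simp add: clinear_scaleR [OF bounded_clinear_absP] clinear_scaleR [OF bounded_clinear]
      clinear_add [OF bounded_clinear_absP] clinear_add [OF bounded_clinear]
      absP_absP P_absP_commute scaleR_diff_right scaleR_add_right)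

lemma absP_eq_pos_part_plus_neg_part: "absP x = pos_part x + neg_part x"
  unfolding pos_part_def neg_part_def
  by (simp add: scaleR_add_right [symmetric] scaleR_diff_right) (simp add: algebra_simps scaleR_2 [symmetric])

lemma P_eq_pos_part_minus_neg_part: "P x = pos_part x - neg_part x"
  unfolding pos_part_def neg_part_def by (simp add: algebra_simps scaleR_2 [symmetric])

lemma pos_part_eq_0: "P x = 0 \<Longrightarrow> pos_part x = 0"
  and neg_part_eq_0: "P x = 0 \<Longrightarrow> neg_part x = 0"
  using absP_eq_0_iff unfolding pos_part_def neg_part_def by simp_all

lemma sqrt_absP_pos_part_commute: "sqrt_absP (pos_part x) = pos_part (sqrt_absP x)"
  and sqrt_absP_neg_part_commute: "sqrt_absP (neg_part x) = neg_part (sqrt_absP x)"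
  using sqrt_absP_sqrt_absP [of "sqrt_absP x"]
  unfolding pos_part_def neg_part_def
  by (simp_all add: clinear_scaleR [OF bounded_clinear_sqrt_absP] clinear_add [OF bounded_clinear_sqrt_absP]
      clinear_diff [OF bounded_clinear_sqrt_absP] P_sqrt_absP_commute flip: sqrt_absP_sqrt_absP)

abbreviation Epos :: "'h \<Rightarrow> 'h" where "Epos \<equiv> support_proj pos_part"
abbreviation Eneg :: "'h \<Rightarrow> 'h" where "Eneg \<equiv> support_proj neg_part"

lemmas selfadjoint_Epos = selfadjoint_support_proj [OF selfadjoint_pos_part]
lemmas selfadjoint_Eneg = selfadjoint_support_proj [OF selfadjoint_neg_part]
lemmas bounded_clinear_Epos = bounded_clinear_support_proj [OF selfadjoint_pos_part]
lemmas bounded_clinear_Eneg = bounded_clinear_support_proj [OF selfadjoint_neg_part]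
lemmas Epos_eq_0_iff = support_proj_eq_0_iff [OF selfadjoint_pos_part]
lemmas Eneg_eq_0_iff = support_proj_eq_0_iff [OF selfadjoint_neg_part]
lemmas Epos_idem = support_proj_idem [OF selfadjoint_pos_part]
lemmas Eneg_idem = support_proj_idem [OF selfadjoint_neg_part]

lemma Epos_pos_part: "Epos (pos_part y) = pos_part y"
  and Eneg_neg_part: "Eneg (neg_part y) = neg_part y"
  by (simp_all add: support_proj_apply selfadjoint_pos_part selfadjoint_neg_part)

lemma Epos_neg_part: "Epos (neg_part y) = 0"
  and Eneg_pos_part: "Eneg (pos_part y) = 0"
  by (simp_all add: support_proj_annihilated selfadjoint_pos_part selfadjoint_neg_part
      pos_part_neg_part neg_part_pos_part)

lemma neg_part_Epos: "neg_part (Epos x) = 0"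
  and pos_part_Eneg: "pos_part (Eneg x) = 0"
  by (simp_all add: apply_support_proj_annihilated selfadjoint_pos_part selfadjoint_neg_part
      pos_part_neg_part neg_part_pos_part)

lemma Epos_Eneg: "Epos (Eneg x) = 0"
  and Eneg_Epos: "Eneg (Epos x) = 0"
  by (simp_all add: Epos_eq_0_iff Eneg_eq_0_iff pos_part_Eneg neg_part_Epos)

lemma P_Epos_plus_Eneg: "P (Epos x + Eneg x) = P x"
  by (simp add: P_eq_pos_part_minus_neg_part clinear_add [OF selfadjoint_bounded_clinear [OF selfadjoint_pos_part]]
      clinear_add [OF selfadjoint_bounded_clinear [OF selfadjoint_neg_part]]
      apply_support_proj selfadjoint_pos_part selfadjoint_neg_part pos_part_Eneg neg_part_Epos)

definition sign :: "'h \<Rightarrow> 'h" where "sign = (\<lambda>x. Epos x - Eneg x)"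

lemma selfadjoint_sign: "selfadjoint sign"
  unfolding sign_def by (rule selfadjoint_diff [OF selfadjoint_Epos selfadjoint_Eneg])

lemma bounded_clinear_sign: "bounded_clinear sign"
  using selfadjoint_sign by (rule selfadjoint_bounded_clinear)

lemma sign_absP: "sign (absP x) = P x"
  unfolding sign_def absP_eq_pos_part_plus_neg_part
  by (simp add: clinear_add [OF bounded_clinear_Epos] clinear_add [OF bounded_clinear_Eneg]
      Epos_pos_part Epos_neg_part Eneg_pos_part Eneg_neg_part P_eq_pos_part_minus_neg_part)

lemma sign_eq_0: "P x = 0 \<Longrightarrow> sign x = 0"
  using Epos_eq_0_iff [of x] Eneg_eq_0_iff [of x] pos_part_eq_0 neg_part_eq_0
  unfolding sign_def by simp

lemma sign_Epos: "sign (Epos x) = Epos x"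
  and sign_Eneg: "sign (Eneg x) = - Eneg x"
  unfolding sign_def by (simp_all add: Epos_idem Eneg_idem Epos_Eneg Eneg_Epos)

lemma sign_sign: "sign (sign x) = Epos x + Eneg x"
  unfolding sign_def
  by (simp add: clinear_diff [OF bounded_clinear_Epos] clinear_diff [OF bounded_clinear_Eneg]
      Epos_idem Eneg_idem Epos_Eneg Eneg_Epos)

lemma sqrt_absP_sign_commute: "sqrt_absP (sign x) = sign (sqrt_absP x)"
  unfolding sign_def
  by (simp add: clinear_diff [OF bounded_clinear_sqrt_absP] support_proj_commute
      selfadjoint_pos_part selfadjoint_neg_part selfadjoint_sqrt_absP
      sqrt_absP_pos_part_commute sqrt_absP_neg_part_commute)

lemma opsign_eq: "opsign P = sign"
  unfolding opsign_def
proof (rule the_equality)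
  show "bounded_clinear sign \<and> sign \<circ> absP = P \<and> (\<forall>x. P x = 0 \<longrightarrow> sign x = 0)"
    using bounded_clinear_sign sign_absP sign_eq_0 by (auto simp: fun_eq_iff)
  fix S assume S: "bounded_clinear S \<and> S \<circ> absP = P \<and> (\<forall>x. P x = 0 \<longrightarrow> S x = 0)"
  have "S x - sign x = 0" for x
  proof (rule selfadjoint_vanishing_on_range_and_kernel [OF selfadjoint_absP, where D = "\<lambda>x. S x - sign x"])
    show "bounded_clinear (\<lambda>x. S x - sign x)" using S bounded_clinear_sign by (intro bounded_clinear_sub) auto
    show "S (absP y) - sign (absP y) = 0" for y using S sign_absP by (metis comp_apply right_minus_eq)
    show "S y - sign y = 0" if "absP y = 0" for y
      using that S sign_eq_0 absP_eq_0_iff by simp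
  qed
  then show "S = sign" by (auto simp: fun_eq_iff)
qed

lemma kerproj_eq: "kerproj P = orth_proj {x. P x = 0}"
proof -
  interpret ker: closed_csubspace "{x. P x = 0}" by (rule closed_csubspace_kernel [OF bounded_clinear])
  have proj: "selfadjoint (orth_proj {x. P x = 0})"
    "orth_proj {x. P x = 0} \<circ> orth_proj {x. P x = 0} = orth_proj {x. P x = 0}"
    "range (orth_proj {x. P x = 0}) = {x. P x = 0}"
    using ker.selfadjoint_orth_proj ker.orth_proj_idem ker.range_orth_proj by (auto simp: fun_eq_iff)
  show ?thesis unfolding kerproj_def
  proof (rule the_equality)
    fix Q assume "selfadjoint Q \<and> Q \<circ> Q = Q \<and> range Q = {x. P x = 0}"
    then show "Q = orth_proj {x. P x = 0}"
      using selfadjoint_idempotent_unique [of Q "orth_proj {x. P x = 0}"] proj by auto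
  qed (use proj in blast)
qed

lemma P_kerproj: "P (kerproj P x) = 0"
  using closed_csubspace.orth_proj_in [OF closed_csubspace_kernel [OF bounded_clinear]]
  unfolding kerproj_eq by blast

end

section \<open>The reproducing kernel Krein space\<close>

lemma closed_fixpoints: "bounded_clinear E \<Longrightarrow> closed {x. E x = x}"
  by (rule closed_Collect_eq) (simp_all add: bounded_clinear_continuous_on continuous_on_id)

locale hat_space = selfadjoint_operator P + bounded_family g
  for P :: "'h::chilbert_space \<Rightarrow> 'h" and g :: "'z \<Rightarrow> 'c::chilbert_space \<Rightarrow> 'h" +
  assumes dense: "closure (cspan (\<Union>z. range (g z))) = UNIV"
begin

definition Phi :: "'h \<Rightarrow> 'z \<Rightarrow> 'c" where "Phi f = hat g (sqrt_absP f)"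

lemma hatspace_eq_range_Phi: "hatspace g P = range Phi"
  unfolding hatspace_def Phi_def by auto

lemma Phi_add: "Phi (f1 + f2) = (\<lambda>z. Phi f1 z + Phi f2 z)"
  and Phi_diff: "Phi (f1 - f2) = (\<lambda>z. Phi f1 z - Phi f2 z)"
  and Phi_scaleC: "Phi (scaleC c f) = (\<lambda>z. scaleC c (Phi f z))"
  and Phi_zero: "Phi 0 = (\<lambda>z. 0)"
  unfolding Phi_def
  by (simp_all add: clinear_add clinear_diff clinear_scaleC clinear_zero bounded_clinear_sqrt_absP
      hat_add hat_diff hat_scaleC hat_zero)

lemma Phi_eq_iff: "Phi f1 = Phi f2 \<longleftrightarrow> P (f1 - f2) = 0"
proof -
  have "Phi f1 = Phi f2 \<longleftrightarrow> sqrt_absP f1 = sqrt_absP f2"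
    unfolding Phi_def using hat_injective [OF dense] by auto
  also have "\<dots> \<longleftrightarrow> sqrt_absP (f1 - f2) = 0"
    by (simp add: clinear_diff [OF bounded_clinear_sqrt_absP])
  also have "\<dots> \<longleftrightarrow> P (f1 - f2) = 0" by (rule sqrt_absP_eq_0_iff)
  finally show ?thesis .
qed

lemma sign_eq_if_kernel: "P (f1 - f2) = 0 \<Longrightarrow> sign f1 = sign f2"
  using sign_eq_0 [of "f1 - f2"] by (simp add: clinear_diff [OF bounded_clinear_sign])

text \<open>The representatives picked by \<open>SOME\<close> in \<open>Kform\<close> differ from \<open>f\<close> and \<open>h\<close> by elements
  of \<open>ker P\<close>, which neither \<open>sign\<close> nor \<open>I - \<pi>\<close> sees.\<close>

lemma Kform_Phi: "Kform g P (Phi f) (Phi h) = cinner (sign f) h"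
proof -
  define f' where "f' = (SOME f'. Phi f = hat g (sqrt_absP f'))"
  define h' where "h' = (SOME h'. Phi h = hat g (sqrt_absP h'))"
  have "Phi f = Phi f'" unfolding f'_def Phi_def by (rule someI [of _ f]) (simp add: Phi_def)
  then have sign_f: "sign f' = sign f"
    unfolding Phi_eq_iff by (metis sign_eq_if_kernel)
  have "Phi h = Phi h'" unfolding h'_def Phi_def by (rule someI [of _ h]) (simp add: Phi_def)
  then have sign_h: "sign (h' - h) = 0"
    unfolding Phi_eq_iff by (metis sign_eq_0 minus_diff_eq clinear_minus [OF bounded_clinear] neg_equal_0_iff_equal)
  have "Kform g P (Phi f) (Phi h) = cinner (sign f') (h' - kerproj P h')"
    unfolding Kform_def Let_def opsign_eq f'_def h'_def Phi_def by simp
  also have "\<dots> = cinner (sign f) h' - cinner f (sign (kerproj P h'))"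
    by (simp add: sign_f cinner_diff_right selfadjointD [OF selfadjoint_sign])
  also have "\<dots> = cinner f (sign h)"
    using sign_h by (simp add: sign_eq_0 [OF P_kerproj] selfadjointD [OF selfadjoint_sign]
        clinear_diff [OF bounded_clinear_sign])
  finally show ?thesis by (simp add: selfadjointD [OF selfadjoint_sign])
qed

lemma fun_csubspace_Phi_image:
  assumes E: "bounded_clinear E"
  shows "fun_csubspace (Phi ` range E)"
  unfolding fun_csubspace_def
proof (intro conjI ballI allI)
  show "(\<lambda>z. 0) \<in> Phi ` range E" using Phi_zero clinear_zero [OF E] by (metis rangeI image_eqI)
next
  fix F G assume "F \<in> Phi ` range E" "G \<in> Phi ` range E"
  then obtain a b where "F = Phi (E a)" "G = Phi (E b)" by blast
  then have "(\<lambda>z. F z + G z) = Phi (E (a + b))" by (simp add: clinear_add [OF E] Phi_add)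
  then show "(\<lambda>z. F z + G z) \<in> Phi ` range E" by blast
next
  fix c F assume "F \<in> Phi ` range E"
  then obtain a where "F = Phi (E a)" by blast
  then have "(\<lambda>z. scaleC c (F z)) = Phi (E (scaleC c a))" by (simp add: clinear_scaleC [OF E] Phi_scaleC)
  then show "(\<lambda>z. scaleC c (F z)) \<in> Phi ` range E" by blast
qed

context
  fixes E :: "'h \<Rightarrow> 'h" and Bf :: "('z \<Rightarrow> 'c) \<Rightarrow> ('z \<Rightarrow> 'c) \<Rightarrow> complex"
  assumes E: "bounded_clinear E" and idem: "\<And>x. E (E x) = E x"
    and Bf: "\<And>x y. Bf (Phi (E x)) (Phi (E y)) = cinner (E x) (E y)"
begin

lemma Bf_Phi_diff: "Re (Bf (\<lambda>z. Phi (E a) z - Phi (E b) z) (\<lambda>z. Phi (E a) z - Phi (E b) z))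
    = (norm (E a - E b))\<^sup>2"
  using Bf [of "a - b" "a - b"] by (simp add: Phi_diff clinear_diff [OF E] cinner_self_Re)

lemma Phi_image_complete:
  fixes s :: "nat \<Rightarrow> 'z \<Rightarrow> 'c"
  assumes s: "\<And>n. s n \<in> Phi ` range E"
    and Cauchy: "\<forall>e>0. \<exists>N. \<forall>m\<ge>N. \<forall>n\<ge>N. Re (Bf (\<lambda>z. s m z - s n z) (\<lambda>z. s m z - s n z)) < e"
  shows "\<exists>F\<in>Phi ` range E. \<forall>e>0. \<exists>N. \<forall>n\<ge>N. Re (Bf (\<lambda>z. s n z - F z) (\<lambda>z. s n z - F z)) < e"
proof -
  have "\<forall>n. \<exists>a. s n = Phi (E a)" using s by blast
  then obtain a where sa: "\<And>n. s n = Phi (E (a n))" by metis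
  define e where "e n = E (a n)" for n
  have "Cauchy e"
  proof (rule CauchyI)
    fix r :: real assume r: "0 < r"
    then obtain N where "\<forall>m\<ge>N. \<forall>n\<ge>N. (norm (e m - e n))\<^sup>2 < r\<^sup>2"
      using Cauchy unfolding sa e_def Bf_Phi_diff by (metis zero_less_power)
    then show "\<exists>N. \<forall>m\<ge>N. \<forall>n\<ge>N. norm (e m - e n) < r"
      using r by (meson power_less_imp_less_base less_imp_le)
  qed
  then obtain L where L: "e \<longlonglongrightarrow> L" using Cauchy_convergent convergent_def by blast
  have "E L = L"
    using closed_sequentially [OF closed_fixpoints [OF E] _ L] by (simp add: e_def idem)
  then have "Phi L \<in> Phi ` range E" by (metis rangeI image_eqI)
  moreover have "\<exists>N. \<forall>n\<ge>N. Re (Bf (\<lambda>z. s n z - Phi L z) (\<lambda>z. s n z - Phi L z)) < r" if "0 < r" for r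
  proof -
    obtain N where "\<And>n. n \<ge> N \<Longrightarrow> norm (e n - L) < sqrt r"
      using L \<open>0 < r\<close> unfolding tendsto_iff eventually_sequentially dist_norm by force
    then have "\<forall>n\<ge>N. (norm (e n - L))\<^sup>2 < r"
      using \<open>0 < r\<close> by (metis norm_ge_zero real_sqrt_less_iff real_sqrt_abs real_sqrt_power abs_norm_cancel)
    then show ?thesis
      using Bf_Phi_diff [of _ L] \<open>E L = L\<close> unfolding sa e_def by metis
  qed
  ultimately show ?thesis by blast
qed

lemma fun_hilbert_Phi_image: "fun_hilbert (Phi ` range E) Bf"
  unfolding fun_hilbert_def
proof (intro conjI ballI allI impI)
  fix F assume "F \<in> Phi ` range E" and "F \<noteq> (\<lambda>z. 0)"
  then obtain a where F: "F = Phi (E a)" by blast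
  then have "E a \<noteq> 0" using \<open>F \<noteq> (\<lambda>z. 0)\<close> Phi_zero by auto
  then show "0 < Re (Bf F F)" unfolding F Bf by (simp add: cinner_self_Re)
qed (use Phi_image_complete in blast)

end

lemma Kform_linear_left:
  "Kform g P (\<lambda>z. scaleC a (Phi f1 z) + Phi f2 z) (Phi h) = a * Kform g P (Phi f1) (Phi h) + Kform g P (Phi f2) (Phi h)"
proof -
  have "(\<lambda>z. scaleC a (Phi f1 z) + Phi f2 z) = Phi (scaleC a f1 + f2)" by (simp add: Phi_add Phi_scaleC)
  then show ?thesis
    by (simp add: Kform_Phi clinear_add [OF bounded_clinear_sign] clinear_scaleC [OF bounded_clinear_sign]
        cinner_add_left cinner_scaleC_left)
qed

lemma Kform_hermitian: "Kform g P (Phi f) (Phi h) = cnj (Kform g P (Phi h) (Phi f))"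
  unfolding Kform_Phi by (metis cinner_commute selfadjointD [OF selfadjoint_sign])

lemma Kform_Epos: "Kform g P (Phi (Epos x)) (Phi (Epos y)) = cinner (Epos x) (Epos y)"
  and Kform_Eneg: "- Kform g P (Phi (Eneg x)) (Phi (Eneg y)) = cinner (Eneg x) (Eneg y)"
  by (simp_all add: Kform_Phi sign_Epos sign_Eneg cinner_minus_left)

lemma Kform_Epos_Eneg: "Kform g P (Phi (Epos x)) (Phi (Eneg y)) = 0"
  by (simp add: Kform_Phi sign_Epos selfadjointD [OF selfadjoint_Eneg, symmetric] Eneg_Epos)

lemma Phi_eq_Epos_plus_Eneg: "Phi f = (\<lambda>z. Phi (Epos f) z + Phi (Eneg f) z)"
proof -
  have "Phi f = Phi (Epos f + Eneg f)" unfolding Phi_eq_iff by (simp add: clinear_diff [OF bounded_clinear] P_Epos_plus_Eneg)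
  then show ?thesis by (simp add: Phi_add)
qed

lemma Phi_image_Epos_inter_Eneg: "Phi ` range Epos \<inter> Phi ` range Eneg = {\<lambda>z. 0}"
proof
  show "Phi ` range Epos \<inter> Phi ` range Eneg \<subseteq> {\<lambda>z. 0}"
  proof
    fix F assume "F \<in> Phi ` range Epos \<inter> Phi ` range Eneg"
    then obtain a b where Fa: "F = Phi (Epos a)" and "F = Phi (Eneg b)" by blast
    then have "P (Epos a - Eneg b) = 0" using Phi_eq_iff by metis
    then have "Epos (Epos a - Eneg b) = 0" using Epos_eq_0_iff pos_part_eq_0 by blast
    then have "Epos a = 0" by (simp add: clinear_diff [OF bounded_clinear_Epos] Epos_idem Epos_Eneg)
    then show "F \<in> {\<lambda>z. 0}" using Fa Phi_zero by simp
  qed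
  show "{\<lambda>z. 0} \<subseteq> Phi ` range Epos \<inter> Phi ` range Eneg"
    using Phi_zero clinear_zero [OF bounded_clinear_Epos] clinear_zero [OF bounded_clinear_Eneg]
    by (metis Int_iff empty_subsetI insert_subset rangeI image_eqI)
qed

lemma fun_krein_space_hatspace: "fun_krein_space (hatspace g P) (Kform g P)"
  unfolding fun_krein_space_def hatspace_eq_range_Phi
proof (intro conjI exI)
  show "fun_csubspace (range Phi)" using fun_csubspace_Phi_image [OF bounded_clinear_ident] by simp
  show "fun_csubspace (Phi ` range Epos)" "fun_csubspace (Phi ` range Eneg)"
    by (simp_all add: fun_csubspace_Phi_image bounded_clinear_Epos bounded_clinear_Eneg)
  show "fun_hilbert (Phi ` range Epos) (Kform g P)"
    by (rule fun_hilbert_Phi_image [OF bounded_clinear_Epos Epos_idem Kform_Epos])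
  show "fun_hilbert (Phi ` range Eneg) (\<lambda>F G. - Kform g P F G)"
    by (rule fun_hilbert_Phi_image [OF bounded_clinear_Eneg Eneg_idem Kform_Eneg])
  show "\<forall>F\<in>range Phi. \<exists>Fp\<in>Phi ` range Epos. \<exists>Fm\<in>Phi ` range Eneg. F = (\<lambda>z. Fp z + Fm z)"
    using Phi_eq_Epos_plus_Eneg by blast
  show "\<forall>F\<in>range Phi. \<forall>G\<in>range Phi. \<forall>H\<in>range Phi. \<forall>a.
      Kform g P (\<lambda>z. scaleC a (F z) + G z) H = a * Kform g P F H + Kform g P G H"
    using Kform_linear_left by blast
  show "\<forall>F\<in>range Phi. \<forall>G\<in>range Phi. Kform g P F G = cnj (Kform g P G F)"
    using Kform_hermitian by blast
  show "\<forall>Fp\<in>Phi ` range Epos. \<forall>Fm\<in>Phi ` range Eneg. Kform g P Fp Fm = 0"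
    using Kform_Epos_Eneg by blast
qed (use Phi_image_Epos_inter_Eneg in auto)

lemma hat_P_eq_Phi: "hat g (P h) = Phi (sign (sqrt_absP h))"
proof -
  have "sqrt_absP (sign (sqrt_absP h)) = sign (absP h)"
    unfolding sqrt_absP_sign_commute sqrt_absP_sqrt_absP ..
  then show ?thesis unfolding Phi_def sign_absP by simp
qed

lemma Kform_reproducing: "Kform g P (Phi f) (hat g (P (g w \<xi>))) = cinner (Phi f w) \<xi>"
proof -
  have "P (Epos f + Eneg f - f) = 0" by (simp add: clinear_diff [OF bounded_clinear] P_Epos_plus_Eneg)
  then have "sqrt_absP (Epos f + Eneg f - f) = 0" using sqrt_absP_eq_0_iff by simp
  then have "sqrt_absP (Epos f + Eneg f) = sqrt_absP f" by (simp add: clinear_diff [OF bounded_clinear_sqrt_absP])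
  then have "cinner (sign (sign f)) (sqrt_absP (g w \<xi>)) = cinner (sqrt_absP f) (g w \<xi>)"
    by (simp add: sign_sign selfadjointD [OF selfadjoint_sqrt_absP, symmetric])
  then show ?thesis
    unfolding hat_P_eq_Phi Kform_Phi by (simp add: Phi_def cinner_hat selfadjointD [OF selfadjoint_sign])
qed

lemma rk_krein_space_hatspace:
  "rk_krein_space (hatspace g P) (Kform g P) (\<lambda>z w \<xi>. hat g (P (g w \<xi>)) z)"
  unfolding rk_krein_space_def
proof (intro conjI allI ballI fun_krein_space_hatspace)
  fix w z \<xi> F
  show "bounded_clinear (\<lambda>\<xi>. hat g (P (g w \<xi>)) z)"
    by (rule bounded_clinear_hat_compose [OF bounded_clinear])
  show "(\<lambda>z. hat g (P (g w \<xi>)) z) \<in> hatspace g P"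
    by (simp add: hatspace_eq_range_Phi hat_P_eq_Phi)
  assume "F \<in> hatspace g P"
  then obtain f where "F = Phi f" unfolding hatspace_eq_range_Phi by blast
  then show "Kform g P F (\<lambda>z. hat g (P (g w \<xi>)) z) = cinner (F w) \<xi>"
    using Kform_reproducing by simp
qed

end

theorem proposition2p3:
  fixes P :: "'h::chilbert_space \<Rightarrow> 'h"
    and g :: "'z \<Rightarrow> 'c::chilbert_space \<Rightarrow> 'h"
  assumes "selfadjoint P"
    and "\<forall>z. bounded_clinear (g z)"
    and "closure (cspan (\<Union>z. range (g z))) = UNIV"
  shows "rk_krein_space (hatspace g P) (Kform g P) (\<lambda>z w \<xi>. hat g (P (g w \<xi>)) z)"
proof -
  interpret hat_space P g
    using assms by unfold_locales auto
  show ?thesis by (rule rk_krein_space_hatspace)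
qed

end
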